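(* Let $H$ be a quasi-bialgebra, $A$ a left $H$-module algebra, $B$ a right $H$-module algebra and $\mathbb{A}$ an $H$-bicomodule algebra. Then $A\otimes B$, with multiplication $(a\otimes b)(a'\otimes b')=aa'\otimes bb'$ and actions $h\cdot(a\otimes b)\cdot h'=h\cdot a\otimes b\cdot h'$, is an $H$-bimodule algebra, and the map $\phi:(A\otimes B)\natural\mathbb{A}\to A\blacktriangleright\!\!<\mathbb{A}>\!\!\blacktriangleleft B$, $\phi((a\otimes b)\natural u)=a\blacktriangleright\!\!<u>\!\!\blacktriangleleft b$, is an algebra isomorphism.
   Context: Work over a field $k$. A quasi-bialgebra is $(H,\Delta,\varepsilon,\Phi)$ where $H$ is a unital associative algebra, $\Delta:H\to H\otimes H$ ($\Delta(h)=h_1\otimes h_2$) and $\varepsilon:H\to k$ are algebra maps, and $\Phi\in H^{\otimes 3}$ is invertible, such that $(id\otimes\Delta)\Delta(h)=\Phi(\Delta\otimes id)(\Delta(h))\Phi^{-1}$, $(id\otimes\varepsilon)\Delta(h)=h\otimes 1$, $(\varepsilon\otimes id)\Delta(h)=1\otimes h$, $(1\otimes\Phi)(id\otimes\Delta\otimes id)(\Phi)(\Phi\otimes 1)=(id\otimes id\otimes\Delta)(\Phi)(\Delta\otimes id\otimes id)(\Phi)$, $(id\otimes\varepsilon\otimes id)(\Phi)=1\otimes1\otimes1$. Write $\Phi=X^1\otimes X^2\otimes X^3$, $\Phi^{-1}=x^1\otimes x^2\otimes x^3$. A left $H$-module algebra is a left $H$-module $A$ with a unital multiplication with $(aa')a''=(X^1\cdot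 a)[(X^2\cdot a')(X^3\cdot a'')]$, $h\cdot(aa')=(h_1\cdot a)(h_2\cdot a')$, $h\cdot 1=\varepsilon(h)1$. A right $H$-module algebra is a right $H$-module $B$ with unital multiplication with $(bb')b''=(b\cdot x^1)[(b'\cdot x^2)(b''\cdot x^3)]$, $(bb')\cdot h=(b\cdot h_1)(b'\cdot h_2)$, $1\cdot h=\varepsilon(h)1$. An $H$-bimodule algebra is an $H$-bimodule $\mathcal{A}$ with unital multiplication such that $(\varphi\psi)\xi=(X^1\cdot\varphi\cdot x^1)[(X^2\cdot\psi\cdot x^2)(X^3\cdot\xi\cdot x^3)]$, $h\cdot(\varphi\psi)=(h_1\cdot\varphi)(h_2\cdot\psi)$, $(\varphi\psi)\cdot h=(\varphi\cdot h_1)(\psi\cdot h_2)$, $h\cdot1=1\cdot h=\varepsilon(h)1$. Left/right $H$-comodule algebras and $H$-bicomodule algebras $(\mathbb{A},\lambda,\rho,\Phi_\lambda,\Phi_\rho,\Phi_{\lambda,\rho})$ are as in the standard quasi-Hopf theory (Hausser–Nill): $\rho:\mathbb{A}\to\mathbb{A}\otimes H$, $\lambda:\mathbb{A}\to H\otimes\mathbb{A}$ algebra maps, $\Phi_\rho\in\mathbb{A}\otimes H\otimes H$, $\Phi_\lambda\in H\otimes H\otimes\mathbb{A}$, $\Phi_{\lambda,\rho}\in H\otimes\mathbb{A}\otimes H$ invertible, with $\Phi_\rho(\rho\otimes id)\rho(u)=(id\otimes\Delta)\rho(u)\Phi_\rho$, $(id\otimes\lambda)\lambda(u)\Phi_\lambda=\Phi_\lambda(\Delta\otimes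 id)\lambda(u)$, $\Phi_{\lambda,\rho}(\lambda\otimes id)\rho(u)=(id\otimes\rho)\lambda(u)\Phi_{\lambda,\rho}$, plus the pentagon-type and counit normalization conditions. Notation: $\rho(u)=u_{<0>}\otimes u_{<1>}$, $\lambda(u)=u_{[-1]}\otimes u_{[0]}$, $\Phi_\rho^{-1}=\tilde{x}^1_\rho\otimes\tilde{x}^2_\rho\otimes\tilde{x}^3_\rho$, $\Phi_\lambda^{-1}=\tilde{x}^1_\lambda\otimes\tilde{x}^2_\lambda\otimes\tilde{x}^3_\lambda$, $\Phi_{\lambda,\rho}^{-1}=\theta^1\otimes\theta^2\otimes\theta^3$. The L-R-smash product $\mathcal{A}\natural\mathbb{A}$ (for an $H$-bimodule algebra $\mathcal{A}$) is $\mathcal{A}\otimes\mathbb{A}$ with product $(\varphi\natural u)(\psi\natural u')=(\tilde{x}^1_{\lambda}\cdot\varphi\cdot\theta^3u'_{<1>}\tilde{x}^2_{\rho})(\tilde{x}^2_{\lambda}u_{[-1]}\theta^1\cdot\psi\cdot\tilde{x}^3_{\rho})\natural\tilde{x}^3_{\lambda}u_{[0]}\theta^2u'_{<0>}\tilde{x}^1_{\rho}$. The two-sided generalized smash product $A\blacktriangleright\!\!<\mathbb{A}>\!\!\blacktriangleleft B$ is $A\otimes\mathbb{A}\otimes B$ (elements $a\blacktriangleright\!\!<u>\!\!\blacktriangleleft b$) with the associative product $(a\blacktriangleright\!\!<u>\!\!\blacktriangleleft b)(a'\blacktriangleright\!\!<u'>\!\!\blacktriangleleft b')=(\tilde{x}^1_\lambda\cdot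 a)(\tilde{x}^2_\lambda u_{[-1]}\theta^1\cdot a')\blacktriangleright\!\!<\tilde{x}^3_\lambda u_{[0]}\theta^2u'_{<0>}\tilde{x}^1_\rho>\!\!\blacktriangleleft(b\cdot\theta^3u'_{<1>}\tilde{x}^2_\rho)(b'\cdot\tilde{x}^3_\rho)$. *)

theory Defs
  imports Main "HOL.Vector_Spaces" "HOL-Library.Function_Algebras"
begin

section \<open>Tensor products over a field k (concrete model)\<close>

text \<open>For k-vector spaces V, W (given by scalar multiplications s1, s2 on the types),
  the element sum_i v_i (x) w_i of V (x) W is modelled by the function
  (f,g) |-> sum_i f(v_i) g(w_i) on pairs of k-linear functionals.  Over a field
  this identifies V (x) W with the span of such functions (the canonical map
  V (x) W -> (V* x W* -> k) is injective).  Finite lists of pairs are the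
  "Sweedler"-type representations sum_i v_i (x) w_i.\<close>

definition tens2 ::
  "('k::field \<Rightarrow> 'v::ab_group_add \<Rightarrow> 'v) \<Rightarrow> ('k \<Rightarrow> 'w::ab_group_add \<Rightarrow> 'w) \<Rightarrow>
   ('v \<times> 'w) list \<Rightarrow> ('v \<Rightarrow> 'k) \<Rightarrow> ('w \<Rightarrow> 'k) \<Rightarrow> 'k" where
  "tens2 s1 s2 xs = (\<lambda>f g.
     if Vector_Spaces.linear s1 (*) f \<and> Vector_Spaces.linear s2 (*) g
     then (\<Sum>(v,w)\<leftarrow>xs. f v * g w) else 0)"

definition tens3 ::
  "('k::field \<Rightarrow> 'v::ab_group_add \<Rightarrow> 'v) \<Rightarrow> ('k \<Rightarrow> 'w::ab_group_add \<Rightarrow> 'w) \<Rightarrow>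
   ('k \<Rightarrow> 'z::ab_group_add \<Rightarrow> 'z) \<Rightarrow>
   ('v \<times> 'w \<times> 'z) list \<Rightarrow> ('v \<Rightarrow> 'k) \<Rightarrow> ('w \<Rightarrow> 'k) \<Rightarrow> ('z \<Rightarrow> 'k) \<Rightarrow> 'k" where
  "tens3 s1 s2 s3 xs = (\<lambda>f g h.
     if Vector_Spaces.linear s1 (*) f \<and> Vector_Spaces.linear s2 (*) g
        \<and> Vector_Spaces.linear s3 (*) h
     then (\<Sum>(v,w,z)\<leftarrow>xs. f v * g w * h z) else 0)"

definition tens4 ::
  "('k::field \<Rightarrow> 'v::ab_group_add \<Rightarrow> 'v) \<Rightarrow> ('k \<Rightarrow> 'w::ab_group_add \<Rightarrow> 'w) \<Rightarrow>
   ('k \<Rightarrow> 'z::ab_group_add \<Rightarrow> 'z) \<Rightarrow> ('k \<Rightarrow> 'y::ab_group_add \<Rightarrow> 'y) \<Rightarrow>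
   ('v \<times> 'w \<times> 'z \<times> 'y) list \<Rightarrow>
   ('v \<Rightarrow> 'k) \<Rightarrow> ('w \<Rightarrow> 'k) \<Rightarrow> ('z \<Rightarrow> 'k) \<Rightarrow> ('y \<Rightarrow> 'k) \<Rightarrow> 'k" where
  "tens4 s1 s2 s3 s4 xs = (\<lambda>f g h l.
     if Vector_Spaces.linear s1 (*) f \<and> Vector_Spaces.linear s2 (*) g
        \<and> Vector_Spaces.linear s3 (*) h \<and> Vector_Spaces.linear s4 (*) l
     then (\<Sum>(v,w,z,y)\<leftarrow>xs. f v * g w * h z * l y) else 0)"

definition sc2 :: "'k::times \<Rightarrow> ('x \<Rightarrow> 'y \<Rightarrow> 'k) \<Rightarrow> ('x \<Rightarrow> 'y \<Rightarrow> 'k)" where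
  "sc2 c T = (\<lambda>f g. c * T f g)"

definition sc3 :: "'k::times \<Rightarrow> ('x \<Rightarrow> 'y \<Rightarrow> 'z \<Rightarrow> 'k) \<Rightarrow> ('x \<Rightarrow> 'y \<Rightarrow> 'z \<Rightarrow> 'k)" where
  "sc3 c T = (\<lambda>f g h. c * T f g h)"

definition mul2 :: "('a::times \<times> 'b::times) list \<Rightarrow> ('a \<times> 'b) list \<Rightarrow> ('a \<times> 'b) list" where
  "mul2 xs ys = [(a * c, b * d). (a, b) \<leftarrow> xs, (c, d) \<leftarrow> ys]"

definition mul3 :: "('a::times \<times> 'b::times \<times> 'c::times) list \<Rightarrow> ('a \<times> 'b \<times> 'c) list
    \<Rightarrow> ('a \<times> 'b \<times> 'c) list" where
  "mul3 xs ys = [(a * a', b * b', c * c'). (a, b, c) \<leftarrow> xs, (a', b', c') \<leftarrow> ys]"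

definition mul4 :: "('a::times \<times> 'b::times \<times> 'c::times \<times> 'd::times) list \<Rightarrow>
    ('a \<times> 'b \<times> 'c \<times> 'd) list \<Rightarrow> ('a \<times> 'b \<times> 'c \<times> 'd) list" where
  "mul4 xs ys = [(a * a', b * b', c * c', d * d'). (a, b, c, d) \<leftarrow> xs, (a', b', c', d') \<leftarrow> ys]"

definition rep2 :: "('k::field \<Rightarrow> 'v::ab_group_add \<Rightarrow> 'v) \<Rightarrow> ('k \<Rightarrow> 'w::ab_group_add \<Rightarrow> 'w) \<Rightarrow>
    'v set \<Rightarrow> (('v \<Rightarrow> 'k) \<Rightarrow> ('w \<Rightarrow> 'k) \<Rightarrow> 'k) \<Rightarrow> ('v \<times> 'w) list" where
  "rep2 s1 s2 M T = (SOME xs. set (map fst xs) \<subseteq> M \<and> tens2 s1 s2 xs = T)"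

definition rep3 :: "('k::field \<Rightarrow> 'v::ab_group_add \<Rightarrow> 'v) \<Rightarrow> ('k \<Rightarrow> 'w::ab_group_add \<Rightarrow> 'w) \<Rightarrow>
    ('k \<Rightarrow> 'z::ab_group_add \<Rightarrow> 'z) \<Rightarrow>
    (('v \<Rightarrow> 'k) \<Rightarrow> ('w \<Rightarrow> 'k) \<Rightarrow> ('z \<Rightarrow> 'k) \<Rightarrow> 'k) \<Rightarrow> ('v \<times> 'w \<times> 'z) list" where
  "rep3 s1 s2 s3 T = (SOME xs. tens3 s1 s2 s3 xs = T)"

section \<open>Algebras and quasi-bialgebras\<close>

definition kalg :: "('k::field \<Rightarrow> 'r::ring_1 \<Rightarrow> 'r) \<Rightarrow> bool" where
  "kalg s \<longleftrightarrow> vector_space s \<and> (\<forall>c x y. s c (x * y) = s c x * y \<and> s c (x * y) = x * s c y)"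

definition alg_hom2 :: "('k::field \<Rightarrow> 'r::ring_1 \<Rightarrow> 'r) \<Rightarrow> ('k \<Rightarrow> 'x::ring_1 \<Rightarrow> 'x) \<Rightarrow>
    ('k \<Rightarrow> 'y::ring_1 \<Rightarrow> 'y) \<Rightarrow> ('r \<Rightarrow> ('x \<times> 'y) list) \<Rightarrow> bool" where
  "alg_hom2 s s1 s2 f \<longleftrightarrow>
     (\<forall>x y. tens2 s1 s2 (f (x + y)) = tens2 s1 s2 (f x @ f y)) \<and>
     (\<forall>c x. tens2 s1 s2 (f (s c x)) = sc2 c (tens2 s1 s2 (f x))) \<and>
     (\<forall>x y. tens2 s1 s2 (f (x * y)) = tens2 s1 s2 (mul2 (f x) (f y))) \<and>
     tens2 s1 s2 (f 1) = tens2 s1 s2 [(1, 1)]"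

text \<open>Quasi-bialgebra (H, Delta, eps, Phi) over k; Phii is Phi^{-1}.\<close>
definition qbialg :: "('k::field \<Rightarrow> 'h::ring_1 \<Rightarrow> 'h) \<Rightarrow> ('h \<Rightarrow> ('h \<times> 'h) list) \<Rightarrow>
    ('h \<Rightarrow> 'k) \<Rightarrow> ('h \<times> 'h \<times> 'h) list \<Rightarrow> ('h \<times> 'h \<times> 'h) list \<Rightarrow> bool" where
  "qbialg s D e Phi Phii \<longleftrightarrow>
     kalg s \<and> alg_hom2 s s s D \<and>
     (\<forall>x y. e (x + y) = e x + e y) \<and> (\<forall>c x. e (s c x) = c * e x) \<and>
     (\<forall>x y. e (x * y) = e x * e y) \<and> e 1 = 1 \<and>
     tens3 s s s (mul3 Phi Phii) = tens3 s s s [(1, 1, 1)] \<and>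
     tens3 s s s (mul3 Phii Phi) = tens3 s s s [(1, 1, 1)] \<and>
     (\<forall>h. tens3 s s s [(a, b1, b2). (a, b) \<leftarrow> D h, (b1, b2) \<leftarrow> D b]
          = tens3 s s s (mul3 (mul3 Phi [(a1, a2, b). (a, b) \<leftarrow> D h, (a1, a2) \<leftarrow> D a]) Phii)) \<and>
     (\<forall>h. (\<Sum>(a, b)\<leftarrow>D h. s (e b) a) = h) \<and>
     (\<forall>h. (\<Sum>(a, b)\<leftarrow>D h. s (e a) b) = h) \<and>
     tens4 s s s s (mul4 (mul4 [(1, x, y, z). (x, y, z) \<leftarrow> Phi]
                              [(x, y1, y2, z). (x, y, z) \<leftarrow> Phi, (y1, y2) \<leftarrow> D y])
                        [(x, y, z, 1). (x, y, z) \<leftarrow> Phi])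
       = tens4 s s s s (mul4 [(x, y, z1, z2). (x, y, z) \<leftarrow> Phi, (z1, z2) \<leftarrow> D z]
                             [(x1, x2, y, z). (x, y, z) \<leftarrow> Phi, (x1, x2) \<leftarrow> D x]) \<and>
     tens2 s s [(s (e y) x, z). (x, y, z) \<leftarrow> Phi] = tens2 s s [(1, 1)]"

section \<open>Module algebras\<close>

definition lmod_alg :: "('k::field \<Rightarrow> 'h::ring_1 \<Rightarrow> 'h) \<Rightarrow> ('h \<Rightarrow> ('h \<times> 'h) list) \<Rightarrow>
    ('h \<Rightarrow> 'k) \<Rightarrow> ('h \<times> 'h \<times> 'h) list \<Rightarrow>
    ('k \<Rightarrow> 'a::ab_group_add \<Rightarrow> 'a) \<Rightarrow> ('a \<Rightarrow> 'a \<Rightarrow> 'a) \<Rightarrow> 'a \<Rightarrow> ('h \<Rightarrow> 'a \<Rightarrow> 'a) \<Rightarrow> bool" where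
  "lmod_alg sH D e Phi s m one act \<longleftrightarrow>
     vector_space s \<and>
     (\<forall>a. Vector_Spaces.linear s s (m a)) \<and> (\<forall>b. Vector_Spaces.linear s s (\<lambda>a. m a b)) \<and>
     (\<forall>a. Vector_Spaces.linear sH s (\<lambda>h. act h a)) \<and> (\<forall>h. Vector_Spaces.linear s s (act h)) \<and>
     (\<forall>a. act 1 a = a) \<and> (\<forall>h g a. act (h * g) a = act h (act g a)) \<and>
     (\<forall>a. m one a = a \<and> m a one = a) \<and>
     (\<forall>a a' a''. m (m a a') a'' = (\<Sum>(x, y, z)\<leftarrow>Phi. m (act x a) (m (act y a') (act z a'')))) \<and>
     (\<forall>h a a'. act h (m a a') = (\<Sum>(h1, h2)\<leftarrow>D h. m (act h1 a) (act h2 a'))) \<and>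
     (\<forall>h. act h one = s (e h) one)"

definition rmod_alg :: "('k::field \<Rightarrow> 'h::ring_1 \<Rightarrow> 'h) \<Rightarrow> ('h \<Rightarrow> ('h \<times> 'h) list) \<Rightarrow>
    ('h \<Rightarrow> 'k) \<Rightarrow> ('h \<times> 'h \<times> 'h) list \<Rightarrow>
    ('k \<Rightarrow> 'b::ab_group_add \<Rightarrow> 'b) \<Rightarrow> ('b \<Rightarrow> 'b \<Rightarrow> 'b) \<Rightarrow> 'b \<Rightarrow> ('b \<Rightarrow> 'h \<Rightarrow> 'b) \<Rightarrow> bool" where
  "rmod_alg sH D e Phii s m one act \<longleftrightarrow>
     vector_space s \<and>
     (\<forall>a. Vector_Spaces.linear s s (m a)) \<and> (\<forall>b. Vector_Spaces.linear s s (\<lambda>a. m a b)) \<and>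
     (\<forall>b. Vector_Spaces.linear sH s (\<lambda>h. act b h)) \<and> (\<forall>h. Vector_Spaces.linear s s (\<lambda>b. act b h)) \<and>
     (\<forall>b. act b 1 = b) \<and> (\<forall>h g b. act b (h * g) = act (act b h) g) \<and>
     (\<forall>b. m one b = b \<and> m b one = b) \<and>
     (\<forall>b b' b''. m (m b b') b'' = (\<Sum>(x, y, z)\<leftarrow>Phii. m (act b x) (m (act b' y) (act b'' z)))) \<and>
     (\<forall>h b b'. act (m b b') h = (\<Sum>(h1, h2)\<leftarrow>D h. m (act b h1) (act b' h2))) \<and>
     (\<forall>h. act one h = s (e h) one)"

text \<open>H-bimodule algebra with carrier M (a subspace of the ambient vector space).\<close>
definition bimod_alg :: "('k::field \<Rightarrow> 'h::ring_1 \<Rightarrow> 'h) \<Rightarrow> ('h \<Rightarrow> ('h \<times> 'h) list) \<Rightarrow>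
    ('h \<Rightarrow> 'k) \<Rightarrow> ('h \<times> 'h \<times> 'h) list \<Rightarrow> ('h \<times> 'h \<times> 'h) list \<Rightarrow>
    ('k \<Rightarrow> 'm::ab_group_add \<Rightarrow> 'm) \<Rightarrow> 'm set \<Rightarrow> ('m \<Rightarrow> 'm \<Rightarrow> 'm) \<Rightarrow> 'm \<Rightarrow>
    ('h \<Rightarrow> 'm \<Rightarrow> 'm) \<Rightarrow> ('m \<Rightarrow> 'h \<Rightarrow> 'm) \<Rightarrow> bool" where
  "bimod_alg sH D e Phi Phii s M m one la ra \<longleftrightarrow>
     vector_space s \<and> 0 \<in> M \<and> (\<forall>x\<in>M. \<forall>y\<in>M. x + y \<in> M) \<and> (\<forall>c. \<forall>x\<in>M. s c x \<in> M) \<and>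
     one \<in> M \<and> (\<forall>x\<in>M. \<forall>y\<in>M. m x y \<in> M) \<and> (\<forall>h. \<forall>x\<in>M. la h x \<in> M \<and> ra x h \<in> M) \<and>
     (\<forall>x\<in>M. \<forall>y\<in>M. \<forall>z\<in>M. m (x + y) z = m x z + m y z \<and> m z (x + y) = m z x + m z y) \<and>
     (\<forall>c. \<forall>x\<in>M. \<forall>y\<in>M. m (s c x) y = s c (m x y) \<and> m x (s c y) = s c (m x y)) \<and>
     (\<forall>h g. \<forall>x\<in>M. la (h + g) x = la h x + la g x \<and> ra x (h + g) = ra x h + ra x g) \<and>
     (\<forall>c h. \<forall>x\<in>M. la (sH c h) x = s c (la h x) \<and> ra x (sH c h) = s c (ra x h)) \<and>
     (\<forall>h. \<forall>x\<in>M. \<forall>y\<in>M. la h (x + y) = la h x + la h y \<and> ra (x + y) h = ra x h + ra y h) \<and>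
     (\<forall>c h. \<forall>x\<in>M. la h (s c x) = s c (la h x) \<and> ra (s c x) h = s c (ra x h)) \<and>
     (\<forall>x\<in>M. la 1 x = x \<and> ra x 1 = x) \<and>
     (\<forall>h g. \<forall>x\<in>M. la (h * g) x = la h (la g x) \<and> ra x (h * g) = ra (ra x h) g
                   \<and> la h (ra x g) = ra (la h x) g) \<and>
     (\<forall>x\<in>M. m one x = x \<and> m x one = x) \<and>
     (\<forall>h. la h one = s (e h) one \<and> ra one h = s (e h) one) \<and>
     (\<forall>x\<in>M. \<forall>y\<in>M. \<forall>z\<in>M. m (m x y) z =
        (\<Sum>(X1, X2, X3)\<leftarrow>Phi. \<Sum>(x1, x2, x3)\<leftarrow>Phii.
           m (la X1 (ra x x1)) (m (la X2 (ra y x2)) (la X3 (ra z x3))))) \<and>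
     (\<forall>h. \<forall>x\<in>M. \<forall>y\<in>M. la h (m x y) = (\<Sum>(h1, h2)\<leftarrow>D h. m (la h1 x) (la h2 y))
                       \<and> ra (m x y) h = (\<Sum>(h1, h2)\<leftarrow>D h. m (ra x h1) (ra y h2)))"

section \<open>Comodule algebras\<close>

text \<open>Right H-comodule algebra (U, rho, Phir); Phiri = Phir^{-1}.\<close>
definition rcomod_alg :: "('k::field \<Rightarrow> 'h::ring_1 \<Rightarrow> 'h) \<Rightarrow> ('h \<Rightarrow> ('h \<times> 'h) list) \<Rightarrow>
    ('h \<Rightarrow> 'k) \<Rightarrow> ('h \<times> 'h \<times> 'h) list \<Rightarrow>
    ('k \<Rightarrow> 'u::ring_1 \<Rightarrow> 'u) \<Rightarrow> ('u \<Rightarrow> ('u \<times> 'h) list) \<Rightarrow>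
    ('u \<times> 'h \<times> 'h) list \<Rightarrow> ('u \<times> 'h \<times> 'h) list \<Rightarrow> bool" where
  "rcomod_alg sH D e Phi sU rho Phir Phiri \<longleftrightarrow>
     kalg sU \<and> alg_hom2 sU sU sH rho \<and>
     tens3 sU sH sH (mul3 Phir Phiri) = tens3 sU sH sH [(1, 1, 1)] \<and>
     tens3 sU sH sH (mul3 Phiri Phir) = tens3 sU sH sH [(1, 1, 1)] \<and>
     (\<forall>u. tens3 sU sH sH (mul3 Phir [(a0, a1, b). (a, b) \<leftarrow> rho u, (a0, a1) \<leftarrow> rho a])
        = tens3 sU sH sH (mul3 [(a, b1, b2). (a, b) \<leftarrow> rho u, (b1, b2) \<leftarrow> D b] Phir)) \<and>
     tens4 sU sH sH sH (mul4 (mul4 [(1, x, y, z). (x, y, z) \<leftarrow> Phi]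
                                   [(a, b1, b2, c). (a, b, c) \<leftarrow> Phir, (b1, b2) \<leftarrow> D b])
                             [(a, b, c, 1). (a, b, c) \<leftarrow> Phir])
       = tens4 sU sH sH sH (mul4 [(a, b, c1, c2). (a, b, c) \<leftarrow> Phir, (c1, c2) \<leftarrow> D c]
                                 [(a0, a1, b, c). (a, b, c) \<leftarrow> Phir, (a0, a1) \<leftarrow> rho a]) \<and>
     (\<forall>u. (\<Sum>(a, b)\<leftarrow>rho u. sU (e b) a) = u) \<and>
     tens2 sU sH [(sU (e b) a, c). (a, b, c) \<leftarrow> Phir] = tens2 sU sH [(1, 1)] \<and>
     tens2 sU sH [(sU (e c) a, b). (a, b, c) \<leftarrow> Phir] = tens2 sU sH [(1, 1)]"

text \<open>Left H-comodule algebra (U, lam, Phil); Phili = Phil^{-1}.\<close>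
definition lcomod_alg :: "('k::field \<Rightarrow> 'h::ring_1 \<Rightarrow> 'h) \<Rightarrow> ('h \<Rightarrow> ('h \<times> 'h) list) \<Rightarrow>
    ('h \<Rightarrow> 'k) \<Rightarrow> ('h \<times> 'h \<times> 'h) list \<Rightarrow>
    ('k \<Rightarrow> 'u::ring_1 \<Rightarrow> 'u) \<Rightarrow> ('u \<Rightarrow> ('h \<times> 'u) list) \<Rightarrow>
    ('h \<times> 'h \<times> 'u) list \<Rightarrow> ('h \<times> 'h \<times> 'u) list \<Rightarrow> bool" where
  "lcomod_alg sH D e Phi sU lam Phil Phili \<longleftrightarrow>
     kalg sU \<and> alg_hom2 sU sH sU lam \<and>
     tens3 sH sH sU (mul3 Phil Phili) = tens3 sH sH sU [(1, 1, 1)] \<and>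
     tens3 sH sH sU (mul3 Phili Phil) = tens3 sH sH sU [(1, 1, 1)] \<and>
     (\<forall>u. tens3 sH sH sU (mul3 [(h, h1, v). (h, w) \<leftarrow> lam u, (h1, v) \<leftarrow> lam w] Phil)
        = tens3 sH sH sU (mul3 Phil [(h1, h2, w). (h, w) \<leftarrow> lam u, (h1, h2) \<leftarrow> D h])) \<and>
     tens4 sH sH sH sU (mul4 (mul4 [(1, a, b, c). (a, b, c) \<leftarrow> Phil]
                                   [(a, b1, b2, c). (a, b, c) \<leftarrow> Phil, (b1, b2) \<leftarrow> D b])
                             [(x, y, z, 1). (x, y, z) \<leftarrow> Phi])
       = tens4 sH sH sH sU (mul4 [(a, b, c1, c0). (a, b, c) \<leftarrow> Phil, (c1, c0) \<leftarrow> lam c]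
                                 [(a1, a2, b, c). (a, b, c) \<leftarrow> Phil, (a1, a2) \<leftarrow> D a]) \<and>
     (\<forall>u. (\<Sum>(h, w)\<leftarrow>lam u. sU (e h) w) = u) \<and>
     tens2 sH sU [(sH (e b) a, c). (a, b, c) \<leftarrow> Phil] = tens2 sH sU [(1, 1)] \<and>
     tens2 sH sU [(sH (e a) b, c). (a, b, c) \<leftarrow> Phil] = tens2 sH sU [(1, 1)]"

text \<open>H-bicomodule algebra (U, lam, rho, Phil, Phir, Philr) (Hausser-Nill);
  the ...i lists are the inverses.\<close>
definition bicomod_alg :: "('k::field \<Rightarrow> 'h::ring_1 \<Rightarrow> 'h) \<Rightarrow> ('h \<Rightarrow> ('h \<times> 'h) list) \<Rightarrow>
    ('h \<Rightarrow> 'k) \<Rightarrow> ('h \<times> 'h \<times> 'h) list \<Rightarrow>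
    ('k \<Rightarrow> 'u::ring_1 \<Rightarrow> 'u) \<Rightarrow> ('u \<Rightarrow> ('h \<times> 'u) list) \<Rightarrow> ('u \<Rightarrow> ('u \<times> 'h) list) \<Rightarrow>
    ('h \<times> 'h \<times> 'u) list \<Rightarrow> ('h \<times> 'h \<times> 'u) list \<Rightarrow>
    ('u \<times> 'h \<times> 'h) list \<Rightarrow> ('u \<times> 'h \<times> 'h) list \<Rightarrow>
    ('h \<times> 'u \<times> 'h) list \<Rightarrow> ('h \<times> 'u \<times> 'h) list \<Rightarrow> bool" where
  "bicomod_alg sH D e Phi sU lam rho Phil Phili Phir Phiri Philr Philri \<longleftrightarrow>
     lcomod_alg sH D e Phi sU lam Phil Phili \<and>
     rcomod_alg sH D e Phi sU rho Phir Phiri \<and>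
     tens3 sH sU sH (mul3 Philr Philri) = tens3 sH sU sH [(1, 1, 1)] \<and>
     tens3 sH sU sH (mul3 Philri Philr) = tens3 sH sU sH [(1, 1, 1)] \<and>
     (\<forall>u. tens3 sH sU sH (mul3 Philr [(h, w, b). (a, b) \<leftarrow> rho u, (h, w) \<leftarrow> lam a])
        = tens3 sH sU sH (mul3 [(h, w0, w1). (h, w) \<leftarrow> lam u, (w0, w1) \<leftarrow> rho w] Philr)) \<and>
     tens4 sH sH sU sH (mul4 (mul4 [(1, a, b, c). (a, b, c) \<leftarrow> Philr]
                                   [(a, b1, b2, c). (a, b, c) \<leftarrow> Philr, (b1, b2) \<leftarrow> lam b])
                             [(a, b, c, 1). (a, b, c) \<leftarrow> Phil])
       = tens4 sH sH sU sH (mul4 [(a, b, c0, c1). (a, b, c) \<leftarrow> Phil, (c0, c1) \<leftarrow> rho c]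
                                 [(a1, a2, b, c). (a, b, c) \<leftarrow> Philr, (a1, a2) \<leftarrow> D a]) \<and>
     tens4 sH sU sH sH (mul4 (mul4 [(1, a, b, c). (a, b, c) \<leftarrow> Phir]
                                   [(a, b0, b1, c). (a, b, c) \<leftarrow> Philr, (b0, b1) \<leftarrow> rho b])
                             [(a, b, c, 1). (a, b, c) \<leftarrow> Philr])
       = tens4 sH sU sH sH (mul4 [(a, b, c1, c2). (a, b, c) \<leftarrow> Philr, (c1, c2) \<leftarrow> D c]
                                 [(a1, a0, b, c). (a, b, c) \<leftarrow> Phir, (a1, a0) \<leftarrow> lam a])"

section \<open>The algebra A (x) B and the two smash products\<close>

definition ab_carrier :: "('k::field \<Rightarrow> 'a::ab_group_add \<Rightarrow> 'a) \<Rightarrow> ('k \<Rightarrow> 'b::ab_group_add \<Rightarrow> 'b)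
    \<Rightarrow> (('a \<Rightarrow> 'k) \<Rightarrow> ('b \<Rightarrow> 'k) \<Rightarrow> 'k) set" where
  "ab_carrier sA sB = range (tens2 sA sB)"

definition ab_mult :: "('k::field \<Rightarrow> 'a::ab_group_add \<Rightarrow> 'a) \<Rightarrow> ('k \<Rightarrow> 'b::ab_group_add \<Rightarrow> 'b) \<Rightarrow>
    ('a \<Rightarrow> 'a \<Rightarrow> 'a) \<Rightarrow> ('b \<Rightarrow> 'b \<Rightarrow> 'b) \<Rightarrow>
    (('a \<Rightarrow> 'k) \<Rightarrow> ('b \<Rightarrow> 'k) \<Rightarrow> 'k) \<Rightarrow> (('a \<Rightarrow> 'k) \<Rightarrow> ('b \<Rightarrow> 'k) \<Rightarrow> 'k) \<Rightarrow>
    (('a \<Rightarrow> 'k) \<Rightarrow> ('b \<Rightarrow> 'k) \<Rightarrow> 'k)" where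
  "ab_mult sA sB mA mB T S = tens2 sA sB
     [(mA a a', mB b b'). (a, b) \<leftarrow> rep2 sA sB UNIV T, (a', b') \<leftarrow> rep2 sA sB UNIV S]"

definition ab_one :: "('k::field \<Rightarrow> 'a::ab_group_add \<Rightarrow> 'a) \<Rightarrow> ('k \<Rightarrow> 'b::ab_group_add \<Rightarrow> 'b) \<Rightarrow>
    'a \<Rightarrow> 'b \<Rightarrow> (('a \<Rightarrow> 'k) \<Rightarrow> ('b \<Rightarrow> 'k) \<Rightarrow> 'k)" where
  "ab_one sA sB oneA oneB = tens2 sA sB [(oneA, oneB)]"

definition ab_lact :: "('k::field \<Rightarrow> 'a::ab_group_add \<Rightarrow> 'a) \<Rightarrow> ('k \<Rightarrow> 'b::ab_group_add \<Rightarrow> 'b) \<Rightarrow>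
    ('h \<Rightarrow> 'a \<Rightarrow> 'a) \<Rightarrow> 'h \<Rightarrow> (('a \<Rightarrow> 'k) \<Rightarrow> ('b \<Rightarrow> 'k) \<Rightarrow> 'k) \<Rightarrow>
    (('a \<Rightarrow> 'k) \<Rightarrow> ('b \<Rightarrow> 'k) \<Rightarrow> 'k)" where
  "ab_lact sA sB act h T = tens2 sA sB [(act h a, b). (a, b) \<leftarrow> rep2 sA sB UNIV T]"

definition ab_ract :: "('k::field \<Rightarrow> 'a::ab_group_add \<Rightarrow> 'a) \<Rightarrow> ('k \<Rightarrow> 'b::ab_group_add \<Rightarrow> 'b) \<Rightarrow>
    ('b \<Rightarrow> 'h \<Rightarrow> 'b) \<Rightarrow> (('a \<Rightarrow> 'k) \<Rightarrow> ('b \<Rightarrow> 'k) \<Rightarrow> 'k) \<Rightarrow> 'h \<Rightarrow>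
    (('a \<Rightarrow> 'k) \<Rightarrow> ('b \<Rightarrow> 'k) \<Rightarrow> 'k)" where
  "ab_ract sA sB act T h = tens2 sA sB [(a, act b h). (a, b) \<leftarrow> rep2 sA sB UNIV T]"

definition lr_carrier :: "('k::field \<Rightarrow> 'm::ab_group_add \<Rightarrow> 'm) \<Rightarrow> 'm set \<Rightarrow>
    ('k \<Rightarrow> 'u::ab_group_add \<Rightarrow> 'u) \<Rightarrow> (('m \<Rightarrow> 'k) \<Rightarrow> ('u \<Rightarrow> 'k) \<Rightarrow> 'k) set" where
  "lr_carrier s M sU = {tens2 s sU xs | xs. set (map fst xs) \<subseteq> M}"

definition lr_pure :: "('m \<Rightarrow> 'm \<Rightarrow> 'm) \<Rightarrow> ('h::ring_1 \<Rightarrow> 'm \<Rightarrow> 'm) \<Rightarrow> ('m \<Rightarrow> 'h \<Rightarrow> 'm) \<Rightarrow>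
    ('u::ring_1 \<Rightarrow> ('h \<times> 'u) list) \<Rightarrow> ('u \<Rightarrow> ('u \<times> 'h) list) \<Rightarrow>
    ('h \<times> 'h \<times> 'u) list \<Rightarrow> ('u \<times> 'h \<times> 'h) list \<Rightarrow> ('h \<times> 'u \<times> 'h) list \<Rightarrow>
    'm \<times> 'u \<Rightarrow> 'm \<times> 'u \<Rightarrow> ('m \<times> 'u) list" where
  "lr_pure m la ra lam rho Phili Phiri Philri p q =
     (case p of (\<phi>, u) \<Rightarrow> case q of (\<psi>, u') \<Rightarrow>
       [(m (la y1 (ra \<phi> (t3 * r1 * z2))) (la (y2 * l1 * t1) (ra \<psi> z3)),
         y3 * l0 * t2 * r0 * z1).
         (y1, y2, y3) \<leftarrow> Phili, (l1, l0) \<leftarrow> lam u, (t1, t2, t3) \<leftarrow> Philri,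
         (r0, r1) \<leftarrow> rho u', (z1, z2, z3) \<leftarrow> Phiri])"

definition lr_mult :: "('k::field \<Rightarrow> 'm::ab_group_add \<Rightarrow> 'm) \<Rightarrow> 'm set \<Rightarrow>
    ('m \<Rightarrow> 'm \<Rightarrow> 'm) \<Rightarrow> ('h::ring_1 \<Rightarrow> 'm \<Rightarrow> 'm) \<Rightarrow> ('m \<Rightarrow> 'h \<Rightarrow> 'm) \<Rightarrow>
    ('k \<Rightarrow> 'u::ring_1 \<Rightarrow> 'u) \<Rightarrow> ('u \<Rightarrow> ('h \<times> 'u) list) \<Rightarrow> ('u \<Rightarrow> ('u \<times> 'h) list) \<Rightarrow>
    ('h \<times> 'h \<times> 'u) list \<Rightarrow> ('u \<times> 'h \<times> 'h) list \<Rightarrow> ('h \<times> 'u \<times> 'h) list \<Rightarrow>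
    (('m \<Rightarrow> 'k) \<Rightarrow> ('u \<Rightarrow> 'k) \<Rightarrow> 'k) \<Rightarrow> (('m \<Rightarrow> 'k) \<Rightarrow> ('u \<Rightarrow> 'k) \<Rightarrow> 'k) \<Rightarrow>
    (('m \<Rightarrow> 'k) \<Rightarrow> ('u \<Rightarrow> 'k) \<Rightarrow> 'k)" where
  "lr_mult s M m la ra sU lam rho Phili Phiri Philri T S = tens2 s sU
     (concat [lr_pure m la ra lam rho Phili Phiri Philri p q.
                p \<leftarrow> rep2 s sU M T, q \<leftarrow> rep2 s sU M S])"

definition lr_one :: "('k::field \<Rightarrow> 'm::ab_group_add \<Rightarrow> 'm) \<Rightarrow> 'm \<Rightarrow>
    ('k \<Rightarrow> 'u::ring_1 \<Rightarrow> 'u) \<Rightarrow> (('m \<Rightarrow> 'k) \<Rightarrow> ('u \<Rightarrow> 'k) \<Rightarrow> 'k)" where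
  "lr_one s one sU = tens2 s sU [(one, 1)]"

definition ts_carrier :: "('k::field \<Rightarrow> 'a::ab_group_add \<Rightarrow> 'a) \<Rightarrow> ('k \<Rightarrow> 'u::ab_group_add \<Rightarrow> 'u) \<Rightarrow>
    ('k \<Rightarrow> 'b::ab_group_add \<Rightarrow> 'b) \<Rightarrow> (('a \<Rightarrow> 'k) \<Rightarrow> ('u \<Rightarrow> 'k) \<Rightarrow> ('b \<Rightarrow> 'k) \<Rightarrow> 'k) set" where
  "ts_carrier sA sU sB = range (tens3 sA sU sB)"

definition ts_pure :: "('a \<Rightarrow> 'a \<Rightarrow> 'a) \<Rightarrow> ('h::ring_1 \<Rightarrow> 'a \<Rightarrow> 'a) \<Rightarrow>
    ('b \<Rightarrow> 'b \<Rightarrow> 'b) \<Rightarrow> ('b \<Rightarrow> 'h \<Rightarrow> 'b) \<Rightarrow>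
    ('u::ring_1 \<Rightarrow> ('h \<times> 'u) list) \<Rightarrow> ('u \<Rightarrow> ('u \<times> 'h) list) \<Rightarrow>
    ('h \<times> 'h \<times> 'u) list \<Rightarrow> ('u \<times> 'h \<times> 'h) list \<Rightarrow> ('h \<times> 'u \<times> 'h) list \<Rightarrow>
    'a \<times> 'u \<times> 'b \<Rightarrow> 'a \<times> 'u \<times> 'b \<Rightarrow> ('a \<times> 'u \<times> 'b) list" where
  "ts_pure mA actA mB actB lam rho Phili Phiri Philri p q =
     (case p of (a, u, b) \<Rightarrow> case q of (a', u', b') \<Rightarrow>
       [(mA (actA y1 a) (actA (y2 * l1 * t1) a'),
         y3 * l0 * t2 * r0 * z1,
         mB (actB b (t3 * r1 * z2)) (actB b' z3)).
         (y1, y2, y3) \<leftarrow> Phili, (l1, l0) \<leftarrow> lam u, (t1, t2, t3) \<leftarrow> Philri,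
         (r0, r1) \<leftarrow> rho u', (z1, z2, z3) \<leftarrow> Phiri])"

definition ts_mult :: "('k::field \<Rightarrow> 'a::ab_group_add \<Rightarrow> 'a) \<Rightarrow> ('k \<Rightarrow> 'u::ring_1 \<Rightarrow> 'u) \<Rightarrow>
    ('k \<Rightarrow> 'b::ab_group_add \<Rightarrow> 'b) \<Rightarrow>
    ('a \<Rightarrow> 'a \<Rightarrow> 'a) \<Rightarrow> ('h::ring_1 \<Rightarrow> 'a \<Rightarrow> 'a) \<Rightarrow>
    ('b \<Rightarrow> 'b \<Rightarrow> 'b) \<Rightarrow> ('b \<Rightarrow> 'h \<Rightarrow> 'b) \<Rightarrow>
    ('u \<Rightarrow> ('h \<times> 'u) list) \<Rightarrow> ('u \<Rightarrow> ('u \<times> 'h) list) \<Rightarrow>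
    ('h \<times> 'h \<times> 'u) list \<Rightarrow> ('u \<times> 'h \<times> 'h) list \<Rightarrow> ('h \<times> 'u \<times> 'h) list \<Rightarrow>
    (('a \<Rightarrow> 'k) \<Rightarrow> ('u \<Rightarrow> 'k) \<Rightarrow> ('b \<Rightarrow> 'k) \<Rightarrow> 'k) \<Rightarrow>
    (('a \<Rightarrow> 'k) \<Rightarrow> ('u \<Rightarrow> 'k) \<Rightarrow> ('b \<Rightarrow> 'k) \<Rightarrow> 'k) \<Rightarrow>
    (('a \<Rightarrow> 'k) \<Rightarrow> ('u \<Rightarrow> 'k) \<Rightarrow> ('b \<Rightarrow> 'k) \<Rightarrow> 'k)" where
  "ts_mult sA sU sB mA actA mB actB lam rho Phili Phiri Philri T S = tens3 sA sU sB
     (concat [ts_pure mA actA mB actB lam rho Phili Phiri Philri p q.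
                p \<leftarrow> rep3 sA sU sB T, q \<leftarrow> rep3 sA sU sB S])"

definition ts_one :: "('k::field \<Rightarrow> 'a::ab_group_add \<Rightarrow> 'a) \<Rightarrow> ('k \<Rightarrow> 'u::ring_1 \<Rightarrow> 'u) \<Rightarrow>
    ('k \<Rightarrow> 'b::ab_group_add \<Rightarrow> 'b) \<Rightarrow> 'a \<Rightarrow> 'b \<Rightarrow>
    (('a \<Rightarrow> 'k) \<Rightarrow> ('u \<Rightarrow> 'k) \<Rightarrow> ('b \<Rightarrow> 'k) \<Rightarrow> 'k)" where
  "ts_one sA sU sB oneA oneB = tens3 sA sU sB [(oneA, 1, oneB)]"

definition phi_map :: "('k::field \<Rightarrow> 'a::ab_group_add \<Rightarrow> 'a) \<Rightarrow> ('k \<Rightarrow> 'u::ring_1 \<Rightarrow> 'u) \<Rightarrow>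
    ('k \<Rightarrow> 'b::ab_group_add \<Rightarrow> 'b) \<Rightarrow>
    (((('a \<Rightarrow> 'k) \<Rightarrow> ('b \<Rightarrow> 'k) \<Rightarrow> 'k) \<Rightarrow> 'k) \<Rightarrow> ('u \<Rightarrow> 'k) \<Rightarrow> 'k) \<Rightarrow>
    (('a \<Rightarrow> 'k) \<Rightarrow> ('u \<Rightarrow> 'k) \<Rightarrow> ('b \<Rightarrow> 'k) \<Rightarrow> 'k)" where
  "phi_map sA sU sB T = tens3 sA sU sB
     (concat [[(a, u, b). (a, b) \<leftarrow> rep2 sA sB UNIV x].
                (x, u) \<leftarrow> rep2 sc2 sU (ab_carrier sA sB) T])"

end

theory Submission
  imports Defs
begin

text \<open>
  A tensor is modelled by its values on tuples of linear functionals, so the only real work is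
  well-definedness: two list representations of the same tensor give the same value under every
  multilinear form.  This follows by expanding the last legs in a finite basis and separating
  points of the first leg by linear functionals.  Granting it, every structure map of
  \<open>A \<otimes> B\<close> and of both smash products can be computed on pure tensors.  There the bimodule
  algebra axioms of \<open>A \<otimes> B\<close> reduce componentwise to those of \<open>A\<close> and \<open>B\<close>, and the
  multiplication formulas of \<open>(a \<otimes> b) \<natural> u\<close> and \<open>a \<bowtie> u \<bowtie> b\<close> coincide summand by summand.
  The map \<open>\<phi>\<close> is the canonical isomorphism \<open>(A \<otimes> B) \<otimes> U \<cong> A \<otimes> U \<otimes> B\<close>: evaluating
  \<open>\<phi> T\<close> at \<open>(f, g, h)\<close> is evaluating \<open>T\<close> at \<open>(x \<mapsto> x f h, g)\<close>, which gives injectivity.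
\<close>

section \<open>Linear functionals\<close>

lemma vector_space_field_mult: "vector_space ((*) :: 'k::field \<Rightarrow> 'k \<Rightarrow> 'k)"
  by unfold_locales (simp_all add: algebra_simps)

lemma linear_functional_iff:
  "Vector_Spaces.linear s ((*) :: 'k::field \<Rightarrow> 'k \<Rightarrow> 'k) f \<longleftrightarrow>
   vector_space s \<and> (\<forall>x y. f (x + y) = f x + f y) \<and> (\<forall>c x. f (s c x) = c * f x)"
  unfolding linear_iff by (simp add: vector_space_field_mult)

lemma linear_functional_add:
  "Vector_Spaces.linear s ((*) :: 'k::field \<Rightarrow> 'k \<Rightarrow> 'k) f \<Longrightarrow> f (x + y) = f x + f y"
  by (simp add: linear_functional_iff)

lemma linear_functional_scale:
  "Vector_Spaces.linear s ((*) :: 'k::field \<Rightarrow> 'k \<Rightarrow> 'k) f \<Longrightarrow> f (s c x) = c * f x"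
  by (simp add: linear_functional_iff)

lemma additive_zero:
  assumes "\<And>x y. f (x + y) = f x + (f y :: 'k::ab_group_add)"
  shows "f (0::'a::monoid_add) = 0"
  using assms[of 0 0] by simp

lemma additive_sum_list:
  assumes "\<And>x y. f (x + y) = f x + (f y :: 'k::ab_group_add)"
  shows "f (\<Sum>x\<leftarrow>xs. (F x :: 'a::monoid_add)) = (\<Sum>x\<leftarrow>xs. f (F x))"
  by (induction xs) (simp_all add: additive_zero[OF assms] assms)

lemma linear_functional_sum_list:
  "Vector_Spaces.linear s ((*) :: 'k::field \<Rightarrow> 'k \<Rightarrow> 'k) f \<Longrightarrow>
   f (\<Sum>x\<leftarrow>xs. F x) = (\<Sum>x\<leftarrow>xs. f (F x))"
  by (rule additive_sum_list) (simp add: linear_functional_add)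

lemma linear_functional_sum:
  "Vector_Spaces.linear s ((*) :: 'k::field \<Rightarrow> 'k \<Rightarrow> 'k) f \<Longrightarrow> f (sum F B) = (\<Sum>b\<in>B. f (F b))"
  by (induction B rule: infinite_finite_induct)
     (simp_all add: additive_zero linear_functional_add)

lemma linear_functional_compose:
  "Vector_Spaces.linear s s' p \<Longrightarrow> Vector_Spaces.linear s' ((*) :: 'k::field \<Rightarrow> 'k \<Rightarrow> 'k) f \<Longrightarrow>
   Vector_Spaces.linear s (*) (\<lambda>x. f (p x))"
  using Vector_Spaces.linear_compose[of s s' p "(*)" f] by (simp add: comp_def)

lemma linear_functional_cmult:
  "Vector_Spaces.linear s (*) f \<Longrightarrow> Vector_Spaces.linear s ((*) :: 'k::field \<Rightarrow> _) (\<lambda>x. c * f x)"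
  by (simp add: linear_functional_iff algebra_simps)

lemma linear_functional_sum_listI:
  "vector_space s \<Longrightarrow> (\<And>y. Vector_Spaces.linear s ((*) :: 'k::field \<Rightarrow> 'k \<Rightarrow> 'k) (F y)) \<Longrightarrow>
   Vector_Spaces.linear s (*) (\<lambda>x. \<Sum>y\<leftarrow>ys. F y x)"
  by (simp add: linear_functional_iff sum_list_addf sum_list_const_mult)

lemma exists_linear_functional_eq_one:
  assumes "vector_space s" "v \<noteq> 0"
  shows "\<exists>f. Vector_Spaces.linear s ((*) :: 'k::field \<Rightarrow> 'k \<Rightarrow> 'k) f \<and> f v = 1"
proof -
  interpret p: vector_space_pair s "(*) :: 'k \<Rightarrow> 'k \<Rightarrow> 'k"
    using assms(1) vector_space_field_mult by (simp add: vector_space_pair_def)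
  have "p.vs1.independent {v}" using assms(2) by simp
  then show ?thesis
    by (intro exI[of _ "p.construct {v} (\<lambda>_. 1)"]) (simp add: p.linear_construct p.construct_basis)
qed

lemma linear_functionals_separate:
  assumes "vector_space s"
    and "\<And>f. Vector_Spaces.linear s ((*) :: 'k::field \<Rightarrow> 'k \<Rightarrow> 'k) f \<Longrightarrow> f x = f y"
  shows "x = y"
proof (rule ccontr)
  assume "x \<noteq> y"
  then obtain f where f: "Vector_Spaces.linear s ((*) :: 'k \<Rightarrow> 'k \<Rightarrow> 'k) f" "f (x - y) = 1"
    using exists_linear_functional_eq_one[OF assms(1), of "x - y"] by auto
  interpret vector_space s by fact
  have "f (x - y) = f x - f y"
    using linear_functional_add[OF f(1), of "x - y" y] by simp
  then show False using f assms(2)[OF f(1)] by simp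
qed

lemma finite_coordinate_expansion:
  assumes vs: "vector_space s" and fin: "finite S"
  obtains B G where "finite B" "\<And>b. b \<in> B \<Longrightarrow> Vector_Spaces.linear s ((*) :: 'k::field \<Rightarrow> 'k \<Rightarrow> 'k) (G b)"
    "\<And>w. w \<in> S \<Longrightarrow> w = (\<Sum>b\<in>B. s (G b w) b)"
proof -
  interpret p: vector_space_pair s "(*) :: 'k \<Rightarrow> 'k \<Rightarrow> 'k"
    using vs vector_space_field_mult by (simp add: vector_space_pair_def)
  interpret q: vector_space_pair s s using vs by (simp add: vector_space_pair_def)
  obtain B where B: "B \<subseteq> S" "p.vs1.independent B" "S \<subseteq> p.vs1.span B"
    by (rule p.vs1.maximal_independent_subset)
  have fB: "finite B" using B(1) fin finite_subset by blast
  define G where "G b = p.construct B (\<lambda>x. if x = b then 1 else (0::'k))" for b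
  have linG: "Vector_Spaces.linear s (*) (G b)" for b
    unfolding G_def by (rule p.linear_construct[OF B(2)])
  have Gb: "G b b' = (if b' = b then 1 else 0)" if "b' \<in> B" for b b'
    unfolding G_def using p.construct_basis[OF B(2) that] by simp
  have lin_expansion: "Vector_Spaces.linear s s (\<lambda>w. \<Sum>b\<in>B. s (G b w) b)"
    unfolding linear_iff
    using vs linear_functional_add[OF linG] linear_functional_scale[OF linG]
    by (simp add: p.vs1.scale_left_distrib sum.distrib p.vs1.scale_sum_right)
  have lin_id: "Vector_Spaces.linear s s (\<lambda>w. w)"
    using vs by (simp add: linear_iff)
  have "w = (\<Sum>b\<in>B. s (G b w) b)" if "w \<in> S" for w
  proof (rule q.linear_eq_on[OF lin_id lin_expansion])
    show "w \<in> p.vs1.span B" using that B(3) by auto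
    fix b' assume b': "b' \<in> B"
    have "(\<Sum>b\<in>B. s (G b b') b) = (\<Sum>b\<in>B. if b = b' then b' else 0)"
      by (rule sum.cong) (auto simp: Gb b')
    also have "\<dots> = b'" using b' fB by (simp add: sum.delta')
    finally show "b' = (\<Sum>b\<in>B. s (G b b') b)" by simp
  qed
  with fB linG show thesis by (rule that)
qed

lemma sum_list_sum_swap: "(\<Sum>x\<leftarrow>xs. sum (F x) B) = (\<Sum>b\<in>B. \<Sum>x\<leftarrow>xs. F x b)"
  by (induction xs) (auto simp: sum.distrib)

lemma sum_list_swap:
  "(\<Sum>x\<leftarrow>xs. \<Sum>y\<leftarrow>ys. F x y) = (\<Sum>y\<leftarrow>ys. \<Sum>x\<leftarrow>xs. (F x y :: 'a::comm_monoid_add))"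
  by (induction xs) (auto simp: sum_list_addf)

lemma sum_list_map_concat: "sum_list (map F (concat xss)) = (\<Sum>xs\<leftarrow>xss. sum_list (map F xs))"
  by (induction xss) auto

lemma sum_list_concat_eq: "sum_list (concat xss) = (\<Sum>xs\<leftarrow>xss. sum_list xs)"
  by (induction xss) auto

lemma sum_list_apply2: "(\<Sum>x\<leftarrow>xs. F x) f g = (\<Sum>x\<leftarrow>xs. (F x f g :: 'k::comm_monoid_add))"
  by (induction xs) auto

lemma sum_list_eq_zeroI:
  "(\<And>x. x \<in> set xs \<Longrightarrow> F x = (0::'a::monoid_add)) \<Longrightarrow> sum_list (map F xs) = 0"
  by (induction xs) auto

lemmas sum_list_flatten_simps =
  sum_list_concat_eq sum_list_map_concat comp_def case_prod_unfold sum_list_addf map_concat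

section \<open>The tensor model\<close>

lemma tens2_apply:
  "Vector_Spaces.linear s1 (*) f \<Longrightarrow> Vector_Spaces.linear s2 (*) g \<Longrightarrow>
   tens2 s1 s2 xs f g = (\<Sum>(v,w)\<leftarrow>xs. f v * g w)"
  by (simp add: tens2_def)

lemma tens3_apply:
  "Vector_Spaces.linear s1 (*) f \<Longrightarrow> Vector_Spaces.linear s2 (*) g \<Longrightarrow>
   Vector_Spaces.linear s3 (*) h \<Longrightarrow> tens3 s1 s2 s3 xs f g h = (\<Sum>(v,w,z)\<leftarrow>xs. f v * g w * h z)"
  by (simp add: tens3_def)

lemma tens2_apply_nonlinear:
  "\<not> (Vector_Spaces.linear s1 (*) f \<and> Vector_Spaces.linear s2 (*) g) \<Longrightarrow> tens2 s1 s2 xs f g = 0"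
  unfolding tens2_def by auto

lemma tens3_apply_nonlinear:
  "\<not> (Vector_Spaces.linear s1 (*) f \<and> Vector_Spaces.linear s2 (*) g \<and> Vector_Spaces.linear s3 (*) h)
   \<Longrightarrow> tens3 s1 s2 s3 xs f g h = 0"
  unfolding tens3_def by auto

lemma tens2_eqI:
  assumes "\<And>f g. Vector_Spaces.linear s1 (*) f \<Longrightarrow> Vector_Spaces.linear s2 (*) g \<Longrightarrow>
     (\<Sum>(v,w)\<leftarrow>xs. f v * g w) = (\<Sum>(v,w)\<leftarrow>ys. f v * g w)"
  shows "tens2 s1 s2 xs = tens2 s1 s2 ys"
  using assms by (auto simp: tens2_def fun_eq_iff)

lemma trilinear_form_eqI:
  assumes "\<And>f g h. Vector_Spaces.linear sV (*) f \<Longrightarrow> Vector_Spaces.linear sW (*) g \<Longrightarrow>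
      Vector_Spaces.linear sZ (*) h \<Longrightarrow> P f g h = Q f g h"
    and "\<And>f g h. \<not> (Vector_Spaces.linear sV (*) f \<and> Vector_Spaces.linear sW (*) g \<and>
      Vector_Spaces.linear sZ (*) h) \<Longrightarrow> P f g h = (0::'k::field)"
    and "\<And>f g h. \<not> (Vector_Spaces.linear sV (*) f \<and> Vector_Spaces.linear sW (*) g \<and>
      Vector_Spaces.linear sZ (*) h) \<Longrightarrow> Q f g h = 0"
  shows "P = Q"
  using assms by (intro ext) metis

lemma tens2_Nil: "tens2 s1 s2 [] = 0"
  by (auto simp: tens2_def fun_eq_iff)

lemma tens2_append: "tens2 s1 s2 (xs @ ys) = tens2 s1 s2 xs + tens2 s1 s2 ys"
  by (auto simp: tens2_def fun_eq_iff)

lemma tens2_concat: "(\<Sum>x\<leftarrow>xs. tens2 s1 s2 (F x)) = tens2 s1 s2 (concat (map F xs))"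
  by (induction xs) (simp_all add: tens2_Nil tens2_append)

lemma sc2_tens2_fst: "sc2 c (tens2 s1 s2 xs) = tens2 s1 s2 [(s1 c v, w). (v, w) \<leftarrow> xs]"
proof (intro ext)
  fix f g
  show "sc2 c (tens2 s1 s2 xs) f g = tens2 s1 s2 [(s1 c v, w). (v, w) \<leftarrow> xs] f g"
    by (cases "Vector_Spaces.linear s1 (*) f \<and> Vector_Spaces.linear s2 (*) g")
       (auto simp: sc2_def tens2_def comp_def case_prod_unfold linear_functional_scale
         sum_list_const_mult[symmetric] mult.assoc)
qed

lemma sc2_tens2_snd: "sc2 c (tens2 s1 s2 xs) = tens2 s1 s2 [(v, s2 c w). (v, w) \<leftarrow> xs]"
proof (intro ext)
  fix f g
  show "sc2 c (tens2 s1 s2 xs) f g = tens2 s1 s2 [(v, s2 c w). (v, w) \<leftarrow> xs] f g"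
    by (cases "Vector_Spaces.linear s1 (*) f \<and> Vector_Spaces.linear s2 (*) g")
       (auto simp: sc2_def tens2_def comp_def case_prod_unfold linear_functional_scale
         sum_list_const_mult[symmetric] mult.assoc mult.left_commute)
qed

lemma vector_space_sc2: "vector_space (sc2 :: 'k::field \<Rightarrow> ('x \<Rightarrow> 'y \<Rightarrow> 'k) \<Rightarrow> _)"
  by unfold_locales (simp_all add: sc2_def fun_eq_iff algebra_simps)

lemma linear_functional_eval2:
  "Vector_Spaces.linear (sc2 :: 'k::field \<Rightarrow> ('x \<Rightarrow> 'y \<Rightarrow> 'k) \<Rightarrow> _) (*) (\<lambda>T. T f h)"
  by (simp add: linear_functional_iff vector_space_sc2 sc2_def)

lemma rep2_tens2:
  "set (map fst xs) \<subseteq> M \<Longrightarrow>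
   set (map fst (rep2 s1 s2 M (tens2 s1 s2 xs))) \<subseteq> M \<and>
   tens2 s1 s2 (rep2 s1 s2 M (tens2 s1 s2 xs)) = tens2 s1 s2 xs"
  unfolding rep2_def by (rule someI[where x=xs]) simp

lemma tens2_rep2_UNIV: "T \<in> range (tens2 s1 s2) \<Longrightarrow> tens2 s1 s2 (rep2 s1 s2 UNIV T) = T"
  using rep2_tens2[of _ UNIV] by auto

lemma tens3_rep3: "tens3 s1 s2 s3 (rep3 s1 s2 s3 (tens3 s1 s2 s3 xs)) = tens3 s1 s2 s3 xs"
  unfolding rep3_def by (rule someI[where x=xs]) simp

lemma sum_list_bilinear_eq_if_contractions_eq:
  fixes s1 :: "'k::field \<Rightarrow> 'v::ab_group_add \<Rightarrow> 'v" and s2 :: "'k \<Rightarrow> 'w::ab_group_add \<Rightarrow> 'w"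
    and \<Phi> :: "'v \<Rightarrow> 'w \<Rightarrow> 'k"
  assumes vs2: "vector_space s2"
    and add1: "\<And>x y w. \<Phi> (x + y) w = \<Phi> x w + \<Phi> y w"
    and scale1: "\<And>c x w. \<Phi> (s1 c x) w = c * \<Phi> x w"
    and lin2: "\<And>v. Vector_Spaces.linear s2 (*) (\<Phi> v)"
    and contractions: "\<And>g. Vector_Spaces.linear s2 (*) g \<Longrightarrow>
       (\<Sum>(v,w)\<leftarrow>xs. s1 (g w) v) = (\<Sum>(v,w)\<leftarrow>ys. s1 (g w) v)"
  shows "(\<Sum>(v,w)\<leftarrow>xs. \<Phi> v w) = (\<Sum>(v,w)\<leftarrow>ys. \<Phi> v w)"
proof -
  obtain B G where B: "finite B" "\<And>b. b \<in> B \<Longrightarrow> Vector_Spaces.linear s2 (*) (G b)"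
    and expansion: "\<And>w. w \<in> set (map snd (xs @ ys)) \<Longrightarrow> w = (\<Sum>b\<in>B. s2 (G b w) b)"
    using finite_coordinate_expansion[OF vs2, of "set (map snd (xs @ ys))"] by auto
  have expand: "\<Phi> v w = (\<Sum>b\<in>B. \<Phi> (s1 (G b w) v) b)" if "w \<in> set (map snd (xs @ ys))" for v w
  proof -
    have "\<Phi> v w = \<Phi> v (\<Sum>b\<in>B. s2 (G b w) b)" using expansion that by auto
    also have "\<dots> = (\<Sum>b\<in>B. G b w * \<Phi> v b)"
      by (simp add: linear_functional_sum[OF lin2] linear_functional_scale[OF lin2])
    also have "\<dots> = (\<Sum>b\<in>B. \<Phi> (s1 (G b w) v) b)" by (simp add: scale1)
    finally show ?thesis .
  qed
  define S where "S L = (\<Sum>b\<in>B. \<Phi> (\<Sum>(v,w)\<leftarrow>L. s1 (G b w) v) b)" for L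
  have S: "(\<Sum>(v,w)\<leftarrow>L. \<Phi> v w) = S L" if "set L \<subseteq> set (xs @ ys)" for L
  proof -
    have "(\<Sum>(v,w)\<leftarrow>L. \<Phi> v w) = (\<Sum>(v,w)\<leftarrow>L. \<Sum>b\<in>B. \<Phi> (s1 (G b w) v) b)"
      by (rule arg_cong[where f=sum_list], rule map_cong[OF refl]) (use that expand in force)
    also have "\<dots> = (\<Sum>b\<in>B. \<Sum>(v,w)\<leftarrow>L. \<Phi> (s1 (G b w) v) b)"
      using sum_list_sum_swap[where F="\<lambda>p b. \<Phi> (s1 (G b (snd p)) (fst p)) b" and xs=L and B=B]
      by (simp add: case_prod_beta')
    also have "\<dots> = S L"
      unfolding S_def
      using additive_sum_list[of "\<lambda>x. \<Phi> x _" "\<lambda>p. s1 (G _ (snd p)) (fst p)" L] add1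
      by (simp add: case_prod_beta')
    finally show ?thesis .
  qed
  have "S xs = S ys" unfolding S_def using contractions B(2) by simp
  then show ?thesis using S[of xs] S[of ys] by simp
qed

lemma tens2_eq_imp_bilinear_sum_list_eq:
  fixes s1 :: "'k::field \<Rightarrow> 'v::ab_group_add \<Rightarrow> 'v" and s2 :: "'k \<Rightarrow> 'w::ab_group_add \<Rightarrow> 'w"
    and \<Phi> :: "'v \<Rightarrow> 'w \<Rightarrow> 'k"
  assumes vs1: "vector_space s1" and vs2: "vector_space s2"
    and eq: "tens2 s1 s2 xs = tens2 s1 s2 ys"
    and lin1: "\<And>w. Vector_Spaces.linear s1 (*) (\<lambda>v. \<Phi> v w)"
    and lin2: "\<And>v. Vector_Spaces.linear s2 (*) (\<Phi> v)"
  shows "(\<Sum>(v,w)\<leftarrow>xs. \<Phi> v w) = (\<Sum>(v,w)\<leftarrow>ys. \<Phi> v w)"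
proof (rule sum_list_bilinear_eq_if_contractions_eq[OF vs2 _ _ lin2])
  show "\<Phi> (x + y) w = \<Phi> x w + \<Phi> y w" for x y w using linear_functional_add[OF lin1] .
  show "\<Phi> (s1 c x) w = c * \<Phi> x w" for c x w using linear_functional_scale[OF lin1] .
  fix g assume g: "Vector_Spaces.linear s2 (*) g"
  show "(\<Sum>(v,w)\<leftarrow>xs. s1 (g w) v) = (\<Sum>(v,w)\<leftarrow>ys. s1 (g w) v)"
  proof (rule linear_functionals_separate[OF vs1])
    fix f :: "'v \<Rightarrow> 'k" assume f: "Vector_Spaces.linear s1 (*) f"
    have contraction: "f (\<Sum>(v,w)\<leftarrow>L. s1 (g w) v) = tens2 s1 s2 L f g" for L
      by (simp add: linear_functional_sum_list[OF f] tens2_apply[OF f g]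
          linear_functional_scale[OF f] case_prod_beta' mult.commute)
    show "f (\<Sum>(v,w)\<leftarrow>xs. s1 (g w) v) = f (\<Sum>(v,w)\<leftarrow>ys. s1 (g w) v)"
      by (simp only: contraction eq)
  qed
qed

text \<open>The trilinear case reduces to the bilinear one by expanding the third leg in a basis.\<close>

lemma tens3_eq_imp_trilinear_sum_list_eq:
  fixes s1 :: "'k::field \<Rightarrow> 'v::ab_group_add \<Rightarrow> 'v" and s2 :: "'k \<Rightarrow> 'w::ab_group_add \<Rightarrow> 'w"
    and s3 :: "'k \<Rightarrow> 'z::ab_group_add \<Rightarrow> 'z" and \<Phi> :: "'v \<Rightarrow> 'w \<Rightarrow> 'z \<Rightarrow> 'k"
  assumes vs1: "vector_space s1" and vs2: "vector_space s2" and vs3: "vector_space s3"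
    and eq: "tens3 s1 s2 s3 xs = tens3 s1 s2 s3 ys"
    and lin1: "\<And>w z. Vector_Spaces.linear s1 (*) (\<lambda>v. \<Phi> v w z)"
    and lin2: "\<And>v z. Vector_Spaces.linear s2 (*) (\<lambda>w. \<Phi> v w z)"
    and lin3: "\<And>v w. Vector_Spaces.linear s3 (*) (\<Phi> v w)"
  shows "(\<Sum>(v,w,z)\<leftarrow>xs. \<Phi> v w z) = (\<Sum>(v,w,z)\<leftarrow>ys. \<Phi> v w z)"
proof -
  obtain B G where B: "finite B" "\<And>b. b \<in> B \<Longrightarrow> Vector_Spaces.linear s3 (*) (G b)"
    and expansion: "\<And>z. z \<in> set (map (snd \<circ> snd) (xs @ ys)) \<Longrightarrow> z = (\<Sum>b\<in>B. s3 (G b z) b)"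
    using finite_coordinate_expansion[OF vs3, of "set (map (snd \<circ> snd) (xs @ ys))"] by auto
  define Lb where "Lb b L = map (\<lambda>(v,w,z). (v, s2 (G b z) w)) L" for b and L :: "('v \<times> 'w \<times> 'z) list"
  have expand: "\<Phi> v w z = (\<Sum>b\<in>B. \<Phi> v (s2 (G b z) w) b)"
    if "z \<in> set (map (snd \<circ> snd) (xs @ ys))" for v w z
  proof -
    have "\<Phi> v w z = \<Phi> v w (\<Sum>b\<in>B. s3 (G b z) b)" using expansion that by auto
    also have "\<dots> = (\<Sum>b\<in>B. G b z * \<Phi> v w b)"
      by (simp add: linear_functional_sum[OF lin3] linear_functional_scale[OF lin3])
    also have "\<dots> = (\<Sum>b\<in>B. \<Phi> v (s2 (G b z) w) b)" by (simp add: linear_functional_scale[OF lin2])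
    finally show ?thesis .
  qed
  have reduce: "(\<Sum>(v,w,z)\<leftarrow>L. \<Phi> v w z) = (\<Sum>b\<in>B. \<Sum>(v,w)\<leftarrow>Lb b L. \<Phi> v w b)"
    if "set L \<subseteq> set (xs @ ys)" for L
  proof -
    have "(\<Sum>(v,w,z)\<leftarrow>L. \<Phi> v w z) = (\<Sum>(v,w,z)\<leftarrow>L. \<Sum>b\<in>B. \<Phi> v (s2 (G b z) w) b)"
      by (rule arg_cong[where f=sum_list], rule map_cong[OF refl]) (use that expand in force)
    also have "\<dots> = (\<Sum>b\<in>B. \<Sum>(v,w,z)\<leftarrow>L. \<Phi> v (s2 (G b z) w) b)"
      using sum_list_sum_swap[where F="\<lambda>p b. \<Phi> (fst p) (s2 (G b (snd (snd p))) (fst (snd p))) b"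
          and xs=L and B=B]
      by (simp add: case_prod_beta')
    also have "\<dots> = (\<Sum>b\<in>B. \<Sum>(v,w)\<leftarrow>Lb b L. \<Phi> v w b)"
      unfolding Lb_def by (simp add: case_prod_beta' comp_def)
    finally show ?thesis .
  qed
  have "(\<Sum>(v,w)\<leftarrow>Lb b xs. \<Phi> v w b) = (\<Sum>(v,w)\<leftarrow>Lb b ys. \<Phi> v w b)" if b: "b \<in> B" for b
  proof (rule tens2_eq_imp_bilinear_sum_list_eq[OF vs1 vs2 _ lin1 lin2])
    show "tens2 s1 s2 (Lb b xs) = tens2 s1 s2 (Lb b ys)"
    proof (rule tens2_eqI)
      fix f g assume f: "Vector_Spaces.linear s1 (*) f" and g: "Vector_Spaces.linear s2 (*) g"
      have "(\<Sum>(v,w)\<leftarrow>Lb b L. f v * g w) = tens3 s1 s2 s3 L f g (G b)" for L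
        unfolding Lb_def
        by (simp add: tens3_apply[OF f g B(2)[OF b]] linear_functional_scale[OF g]
            case_prod_beta' comp_def algebra_simps)
      then show "(\<Sum>(v,w)\<leftarrow>Lb b xs. f v * g w) = (\<Sum>(v,w)\<leftarrow>Lb b ys. f v * g w)"
        by (simp only: eq)
    qed
  qed
  then show ?thesis using reduce[of xs] reduce[of ys] by simp
qed

lemma tens2_eq_imp_sum_list_eq:
  assumes "tens2 s1 s2 xs = tens2 s1 s2 ys"
    and "Vector_Spaces.linear s1 (*) f" "Vector_Spaces.linear s2 (*) g"
  shows "(\<Sum>x\<leftarrow>xs. f (fst x) * g (snd x)) = (\<Sum>x\<leftarrow>ys. f (fst x) * g (snd x))"
  using tens2_apply[OF assms(2,3), of xs] tens2_apply[OF assms(2,3), of ys] assms(1)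
  by (simp add: case_prod_unfold)

lemma tens2_eq_imp_sum_list_sum_list_eq:
  assumes "tens2 s1 s2 xs = tens2 s1 s2 ys"
    and "\<And>z. Vector_Spaces.linear s1 (*) (\<lambda>a. F a z)" "\<And>z. Vector_Spaces.linear s2 (*) (\<lambda>b. G b z)"
  shows "(\<Sum>x\<leftarrow>xs. \<Sum>z\<leftarrow>zs. F (fst x) z * G (snd x) z) = (\<Sum>x\<leftarrow>ys. \<Sum>z\<leftarrow>zs. F (fst x) z * G (snd x) z)"
  by (subst (1 2) sum_list_swap, rule arg_cong[where f=sum_list], rule map_cong[OF refl])
     (rule tens2_eq_imp_sum_list_eq[OF assms(1) assms(2,3)])

lemma linear_functional_through_tens2:
  fixes s :: "'k::field \<Rightarrow> 'u::ab_group_add \<Rightarrow> 'u"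
    and s1 :: "'k \<Rightarrow> 'v::ab_group_add \<Rightarrow> 'v" and s2 :: "'k \<Rightarrow> 'w::ab_group_add \<Rightarrow> 'w"
    and F :: "'u \<Rightarrow> ('v \<times> 'w) list" and \<Xi> :: "'v \<times> 'w \<Rightarrow> 'k"
  assumes vs: "vector_space s" and vs1: "vector_space s1" and vs2: "vector_space s2"
    and add: "\<And>x y. tens2 s1 s2 (F (x + y)) = tens2 s1 s2 (F x @ F y)"
    and scale: "\<And>c x. tens2 s1 s2 (F (s c x)) = sc2 c (tens2 s1 s2 (F x))"
    and lin1: "\<And>w. Vector_Spaces.linear s1 (*) (\<lambda>v. \<Xi> (v, w))"
    and lin2: "\<And>v. Vector_Spaces.linear s2 (*) (\<lambda>w. \<Xi> (v, w))"
  shows "Vector_Spaces.linear s (*) (\<lambda>u. \<Sum>q\<leftarrow>F u. \<Xi> q)"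
proof -
  have well_defined: "(\<Sum>q\<leftarrow>xs. \<Xi> q) = (\<Sum>q\<leftarrow>ys. \<Xi> q)"
    if "tens2 s1 s2 xs = tens2 s1 s2 ys" for xs ys
    using tens2_eq_imp_bilinear_sum_list_eq[OF vs1 vs2 that lin1 lin2] by simp
  show ?thesis unfolding linear_functional_iff
  proof (intro conjI allI)
    fix x y
    show "(\<Sum>q\<leftarrow>F (x + y). \<Xi> q) = (\<Sum>q\<leftarrow>F x. \<Xi> q) + (\<Sum>q\<leftarrow>F y. \<Xi> q)"
      using well_defined[OF add[of x y]] by simp
  next
    fix c x
    have "tens2 s1 s2 (F (s c x)) = tens2 s1 s2 [(v, s2 c w). (v, w) \<leftarrow> F x]"
      by (simp add: scale sc2_tens2_snd)
    from well_defined[OF this] show "(\<Sum>q\<leftarrow>F (s c x). \<Xi> q) = c * (\<Sum>q\<leftarrow>F x. \<Xi> q)"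
      by (simp add: comp_def case_prod_unfold linear_functional_scale[OF lin2] sum_list_const_mult)
  qed (fact vs)
qed

section \<open>The bimodule algebra \<open>A \<otimes> B\<close>\<close>

lemma ab_mult_tens2:
  assumes "\<And>a. Vector_Spaces.linear sA sA (mA a)" "\<And>a'. Vector_Spaces.linear sA sA (\<lambda>a. mA a a')"
    and "\<And>b. Vector_Spaces.linear sB sB (mB b)" "\<And>b'. Vector_Spaces.linear sB sB (\<lambda>b. mB b b')"
  shows "ab_mult sA sB mA mB (tens2 sA sB xs) (tens2 sA sB ys) =
    tens2 sA sB [(mA a a', mB b b'). (a, b) \<leftarrow> xs, (a', b') \<leftarrow> ys]"
  unfolding ab_mult_def
proof (rule tens2_eqI)
  fix f g assume f: "Vector_Spaces.linear sA (*) f" and g: "Vector_Spaces.linear sB (*) g"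
  let ?R = "rep2 sA sB UNIV (tens2 sA sB xs)" and ?R' = "rep2 sA sB UNIV (tens2 sA sB ys)"
  have R: "tens2 sA sB ?R = tens2 sA sB xs" and R': "tens2 sA sB ?R' = tens2 sA sB ys"
    by (simp_all add: tens2_rep2_UNIV)
  have "(\<Sum>x\<leftarrow>?R. \<Sum>y\<leftarrow>?R'. f (mA (fst x) (fst y)) * g (mB (snd x) (snd y))) =
        (\<Sum>x\<leftarrow>xs. \<Sum>y\<leftarrow>?R'. f (mA (fst x) (fst y)) * g (mB (snd x) (snd y)))"
    by (rule tens2_eq_imp_sum_list_sum_list_eq[OF R])
       (intro linear_functional_compose[OF assms(2) f] linear_functional_compose[OF assms(4) g])+
  also have "\<dots> = (\<Sum>x\<leftarrow>xs. \<Sum>y\<leftarrow>ys. f (mA (fst x) (fst y)) * g (mB (snd x) (snd y)))"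
    by (rule arg_cong[where f=sum_list], rule map_cong[OF refl], rule tens2_eq_imp_sum_list_eq[OF R'])
       (intro linear_functional_compose[OF assms(1) f] linear_functional_compose[OF assms(3) g])+
  finally show "(\<Sum>(v,w)\<leftarrow>[(mA a a', mB b b'). (a, b) \<leftarrow> ?R, (a', b') \<leftarrow> ?R']. f v * g w) =
      (\<Sum>(v,w)\<leftarrow>[(mA a a', mB b b'). (a, b) \<leftarrow> xs, (a', b') \<leftarrow> ys]. f v * g w)"
    by (simp add: sum_list_map_concat comp_def case_prod_unfold)
qed

lemma ab_lact_tens2:
  assumes "Vector_Spaces.linear sA sA (act h)"
  shows "ab_lact sA sB act h (tens2 sA sB xs) = tens2 sA sB [(act h a, b). (a, b) \<leftarrow> xs]"
  unfolding ab_lact_def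
proof (rule tens2_eqI)
  fix f g assume f: "Vector_Spaces.linear sA (*) f" and g: "Vector_Spaces.linear sB (*) g"
  have "(\<Sum>x\<leftarrow>rep2 sA sB UNIV (tens2 sA sB xs). f (act h (fst x)) * g (snd x)) =
        (\<Sum>x\<leftarrow>xs. f (act h (fst x)) * g (snd x))"
    by (rule tens2_eq_imp_sum_list_eq[OF _ linear_functional_compose[OF assms f] g])
       (simp add: tens2_rep2_UNIV)
  then show "(\<Sum>(v,w)\<leftarrow>[(act h a, b). (a, b) \<leftarrow> rep2 sA sB UNIV (tens2 sA sB xs)]. f v * g w) =
      (\<Sum>(v,w)\<leftarrow>[(act h a, b). (a, b) \<leftarrow> xs]. f v * g w)"
    by (simp add: comp_def case_prod_unfold)
qed

lemma ab_ract_tens2: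
  assumes "Vector_Spaces.linear sB sB (\<lambda>b. act b h)"
  shows "ab_ract sA sB act (tens2 sA sB xs) h = tens2 sA sB [(a, act b h). (a, b) \<leftarrow> xs]"
  unfolding ab_ract_def
proof (rule tens2_eqI)
  fix f g assume f: "Vector_Spaces.linear sA (*) f" and g: "Vector_Spaces.linear sB (*) g"
  have "(\<Sum>x\<leftarrow>rep2 sA sB UNIV (tens2 sA sB xs). f (fst x) * g (act (snd x) h)) =
        (\<Sum>x\<leftarrow>xs. f (fst x) * g (act (snd x) h))"
    by (rule tens2_eq_imp_sum_list_eq[OF _ f linear_functional_compose[OF assms g]])
       (simp add: tens2_rep2_UNIV)
  then show "(\<Sum>(v,w)\<leftarrow>[(a, act b h). (a, b) \<leftarrow> rep2 sA sB UNIV (tens2 sA sB xs)]. f v * g w) =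
      (\<Sum>(v,w)\<leftarrow>[(a, act b h). (a, b) \<leftarrow> xs]. f v * g w)"
    by (simp add: comp_def case_prod_unfold)
qed

locale module_algebra_pair =
  fixes sH :: "'k::field \<Rightarrow> 'h::ring_1 \<Rightarrow> 'h"
    and D :: "'h \<Rightarrow> ('h \<times> 'h) list" and e :: "'h \<Rightarrow> 'k"
    and Phi Phii :: "('h \<times> 'h \<times> 'h) list"
    and sA :: "'k \<Rightarrow> 'a::ab_group_add \<Rightarrow> 'a" and mA :: "'a \<Rightarrow> 'a \<Rightarrow> 'a" and oneA :: 'a
    and actA :: "'h \<Rightarrow> 'a \<Rightarrow> 'a"
    and sB :: "'k \<Rightarrow> 'b::ab_group_add \<Rightarrow> 'b" and mB :: "'b \<Rightarrow> 'b \<Rightarrow> 'b" and oneB :: 'b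
    and actB :: "'b \<Rightarrow> 'h \<Rightarrow> 'b"
  assumes A: "lmod_alg sH D e Phi sA mA oneA actA"
    and B: "rmod_alg sH D e Phii sB mB oneB actB"
begin

abbreviation "AB \<equiv> ab_carrier sA sB"
abbreviation "mAB \<equiv> ab_mult sA sB mA mB"
abbreviation "oneAB \<equiv> ab_one sA sB oneA oneB"
abbreviation "lactAB \<equiv> ab_lact sA sB actA"
abbreviation "ractAB \<equiv> ab_ract sA sB actB"

lemma
  shows vector_space_A: "vector_space sA"
    and linear_mA: "Vector_Spaces.linear sA sA (mA a)" "Vector_Spaces.linear sA sA (\<lambda>x. mA x a)"
    and linear_actA: "Vector_Spaces.linear sH sA (\<lambda>h. actA h a)" "Vector_Spaces.linear sA sA (actA h)"
    and actA_one: "actA 1 a = a"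
    and actA_mult: "actA (h * g) a = actA h (actA g a)"
    and mA_unit: "mA oneA a = a" "mA a oneA = a"
    and mA_quasi_assoc:
      "mA (mA a a') a'' = (\<Sum>(x, y, z)\<leftarrow>Phi. mA (actA x a) (mA (actA y a') (actA z a'')))"
    and actA_mA: "actA h (mA a a') = (\<Sum>(h1, h2)\<leftarrow>D h. mA (actA h1 a) (actA h2 a'))"
    and actA_oneA: "actA h oneA = sA (e h) oneA"
  using A unfolding lmod_alg_def by blast+

lemma
  shows vector_space_B: "vector_space sB"
    and linear_mB: "Vector_Spaces.linear sB sB (mB b)" "Vector_Spaces.linear sB sB (\<lambda>x. mB x b)"
    and linear_actB: "Vector_Spaces.linear sH sB (\<lambda>h. actB b h)" "Vector_Spaces.linear sB sB (\<lambda>b. actB b h)"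
    and actB_one: "actB b 1 = b"
    and actB_mult: "actB b (h * g) = actB (actB b h) g"
    and mB_unit: "mB oneB b = b" "mB b oneB = b"
    and mB_quasi_assoc:
      "mB (mB b b') b'' = (\<Sum>(x, y, z)\<leftarrow>Phii. mB (actB b x) (mB (actB b' y) (actB b'' z)))"
    and actB_mB: "actB (mB b b') h = (\<Sum>(h1, h2)\<leftarrow>D h. mB (actB b h1) (actB b' h2))"
    and actB_oneB: "actB oneB h = sB (e h) oneB"
  using B unfolding rmod_alg_def by blast+

lemma module_algebra_linearity_simps:
  "mA a (x + y) = mA a x + mA a y" "mA a (sA c x) = sA c (mA a x)"
  "mA (x + y) a = mA x a + mA y a" "mA (sA c x) a = sA c (mA x a)"
  "actA (h + g) a = actA h a + actA g a" "actA (sH c h) a = sA c (actA h a)"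
  "actA h (x + y) = actA h x + actA h y" "actA h (sA c x) = sA c (actA h x)"
  "mB b (u + v) = mB b u + mB b v" "mB b (sB c u) = sB c (mB b u)"
  "mB (u + v) b = mB u b + mB v b" "mB (sB c u) b = sB c (mB u b)"
  "actB b (h + g) = actB b h + actB b g" "actB b (sH c h) = sB c (actB b h)"
  "actB (u + v) h = actB u h + actB v h" "actB (sB c u) h = sB c (actB u h)"
  using linear_mA[of a] linear_actA(1)[of a] linear_actA(2)[of h]
    linear_mB[of b] linear_actB(1)[of b] linear_actB(2)[of h]
  by (simp_all add: linear_iff)

lemmas ab_tens2_simps =
  ab_mult_tens2[OF linear_mA linear_mB] ab_lact_tens2[OF linear_actA(2)]
  ab_ract_tens2[OF linear_actB(2)] sc2_tens2_fst ab_one_def tens2_append[symmetric]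

lemmas ab_eval_simps =
  sum_list_flatten_simps linear_functional_add linear_functional_scale linear_functional_sum_list
  module_algebra_linearity_simps

lemma ab_carrier_closed:
  shows "0 \<in> AB" and "x \<in> AB \<Longrightarrow> y \<in> AB \<Longrightarrow> x + y \<in> AB" and "x \<in> AB \<Longrightarrow> sc2 c x \<in> AB"
    and "oneAB \<in> AB" and "x \<in> AB \<Longrightarrow> y \<in> AB \<Longrightarrow> mAB x y \<in> AB"
    and "x \<in> AB \<Longrightarrow> lactAB h x \<in> AB" and "x \<in> AB \<Longrightarrow> ractAB x h \<in> AB"
  by (auto simp: ab_carrier_def ab_tens2_simps) (metis rangeI tens2_Nil)

lemma mAB_bilinear:
  assumes "x \<in> AB" "y \<in> AB" "z \<in> AB"
  shows "mAB (x + y) z = mAB x z + mAB y z" and "mAB z (x + y) = mAB z x + mAB z y"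
    and "mAB (sc2 c x) y = sc2 c (mAB x y)" and "mAB x (sc2 c y) = sc2 c (mAB x y)"
  using assms by (auto simp: ab_carrier_def ab_tens2_simps ab_eval_simps intro!: tens2_eqI)

lemma actions_AB_linear:
  assumes "x \<in> AB" "y \<in> AB"
  shows "lactAB (h + g) x = lactAB h x + lactAB g x" and "ractAB x (h + g) = ractAB x h + ractAB x g"
    and "lactAB (sH c h) x = sc2 c (lactAB h x)" and "ractAB x (sH c h) = sc2 c (ractAB x h)"
    and "lactAB h (x + y) = lactAB h x + lactAB h y" and "ractAB (x + y) h = ractAB x h + ractAB y h"
    and "lactAB h (sc2 c x) = sc2 c (lactAB h x)" and "ractAB (sc2 c x) h = sc2 c (ractAB x h)"
  using assms by (auto simp: ab_carrier_def ab_tens2_simps ab_eval_simps algebra_simps intro!: tens2_eqI)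

lemma actions_AB_compatible:
  assumes "x \<in> AB"
  shows "lactAB 1 x = x" and "ractAB x 1 = x"
    and "lactAB (h * g) x = lactAB h (lactAB g x)" and "ractAB x (h * g) = ractAB (ractAB x h) g"
    and "lactAB h (ractAB x g) = ractAB (lactAB h x) g"
  using assms by (auto simp: ab_carrier_def ab_tens2_simps actA_one actB_one actA_mult actB_mult
      comp_def case_prod_unfold)

lemma oneAB_unit:
  shows "x \<in> AB \<Longrightarrow> mAB oneAB x = x" and "x \<in> AB \<Longrightarrow> mAB x oneAB = x"
    and "lactAB h oneAB = sc2 (e h) oneAB" and "ractAB oneAB h = sc2 (e h) oneAB"
  by (auto simp: ab_carrier_def ab_tens2_simps mA_unit mB_unit actA_oneA actB_oneB
      comp_def case_prod_unfold ab_eval_simps intro!: tens2_eqI)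

lemma mAB_quasi_assoc:
  assumes "x \<in> AB" "y \<in> AB" "z \<in> AB"
  shows "mAB (mAB x y) z = (\<Sum>(X1, X2, X3)\<leftarrow>Phi. \<Sum>(x1, x2, x3)\<leftarrow>Phii.
           mAB (lactAB X1 (ractAB x x1)) (mAB (lactAB X2 (ractAB y x2)) (lactAB X3 (ractAB z x3))))"
  using assms
  apply (auto simp: ab_carrier_def ab_tens2_simps case_prod_unfold tens2_concat)
  apply (rule tens2_eqI, simp add: ab_eval_simps mA_quasi_assoc mB_quasi_assoc
      sum_list_mult_const[symmetric] sum_list_const_mult[symmetric])
  apply (simp only: sum_list_swap[where xs="Phii"])
  apply (simp only: sum_list_swap[where xs="Phi"])
  done

lemma actions_AB_multiplicative:
  assumes "x \<in> AB" "y \<in> AB"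
  shows "lactAB h (mAB x y) = (\<Sum>(h1, h2)\<leftarrow>D h. mAB (lactAB h1 x) (lactAB h2 y))"
    and "ractAB (mAB x y) h = (\<Sum>(h1, h2)\<leftarrow>D h. mAB (ractAB x h1) (ractAB y h2))"
  using assms
   apply (auto simp: ab_carrier_def ab_tens2_simps case_prod_unfold tens2_concat)
   apply (rule tens2_eqI, simp add: ab_eval_simps actA_mA
      sum_list_mult_const[symmetric] sum_list_const_mult[symmetric])
   apply (simp only: sum_list_swap[where xs="D _"])
  apply (rule tens2_eqI, simp add: ab_eval_simps actB_mB
      sum_list_mult_const[symmetric] sum_list_const_mult[symmetric])
  apply (simp only: sum_list_swap[where xs="D _"])
  done

lemma bimod_alg_AB: "bimod_alg sH D e Phi Phii sc2 AB mAB oneAB lactAB ractAB"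
  unfolding bimod_alg_def
  by (simp add: vector_space_sc2 ab_carrier_closed mAB_bilinear actions_AB_linear
      actions_AB_compatible oneAB_unit mAB_quasi_assoc actions_AB_multiplicative)

end

section \<open>The map \<open>\<phi>\<close>\<close>

lemma ab_carrier_apply_nonlinear:
  "x \<in> ab_carrier sA sB \<Longrightarrow> \<not> (Vector_Spaces.linear sA (*) f \<and> Vector_Spaces.linear sB (*) h) \<Longrightarrow>
   x f h = 0"
  unfolding ab_carrier_def using tens2_apply_nonlinear by fastforce

lemma lr_carrier_rep2:
  "T \<in> lr_carrier s M sU \<Longrightarrow> set (map fst (rep2 s sU M T)) \<subseteq> M \<and> tens2 s sU (rep2 s sU M T) = T"
  unfolding lr_carrier_def using rep2_tens2 by blast

lemma tens2_in_lr_carrier: "set (map fst xs) \<subseteq> M \<Longrightarrow> tens2 s sU xs \<in> lr_carrier s M sU"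
  unfolding lr_carrier_def by blast

lemma lr_carrierE:
  assumes "T \<in> lr_carrier s M sU"
  obtains xs where "set (map fst xs) \<subseteq> M" "T = tens2 s sU xs"
  using assms unfolding lr_carrier_def by blast

lemma lr_carrier_add:
  assumes "x \<in> lr_carrier s M sU" "y \<in> lr_carrier s M sU"
  shows "x + y \<in> lr_carrier s M sU"
proof -
  obtain xs ys where xs: "set (map fst xs) \<subseteq> M" "x = tens2 s sU xs"
    and ys: "set (map fst ys) \<subseteq> M" "y = tens2 s sU ys"
    using assms by (meson lr_carrierE)
  have "tens2 s sU (xs @ ys) \<in> lr_carrier s M sU"
    using xs(1) ys(1) by (intro tens2_in_lr_carrier) auto
  then show ?thesis by (simp add: xs(2) ys(2) tens2_append)
qed

lemma lr_carrier_sc2: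
  assumes "x \<in> lr_carrier sc2 (ab_carrier sA sB) sU"
  shows "sc2 c x \<in> lr_carrier sc2 (ab_carrier sA sB) sU"
proof -
  obtain xs where xs: "set (map fst xs) \<subseteq> ab_carrier sA sB" "x = tens2 sc2 sU xs"
    using assms by (rule lr_carrierE)
  have "sc2 c v \<in> ab_carrier sA sB" if "v \<in> ab_carrier sA sB" for v
    using that by (auto simp: ab_carrier_def sc2_tens2_fst)
  then have "set (map fst [(sc2 c v, w). (v, w) \<leftarrow> xs]) \<subseteq> ab_carrier sA sB"
    using xs(1) by auto
  then show ?thesis by (simp add: xs(2) sc2_tens2_fst tens2_in_lr_carrier)
qed

locale phi_map_setting =
  fixes sA :: "'k::field \<Rightarrow> 'a::ab_group_add \<Rightarrow> 'a" and sB :: "'k \<Rightarrow> 'b::ab_group_add \<Rightarrow> 'b"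
    and sU :: "'k \<Rightarrow> 'u::ring_1 \<Rightarrow> 'u"
  assumes vector_space_U: "vector_space sU"
begin

abbreviation "LR \<equiv> lr_carrier sc2 (ab_carrier sA sB) sU"
abbreviation "phi \<equiv> phi_map sA sU sB"

definition flatten ::
    "((('a \<Rightarrow> 'k) \<Rightarrow> ('b \<Rightarrow> 'k) \<Rightarrow> 'k) \<times> 'u) list \<Rightarrow> ('a \<times> 'u \<times> 'b) list" where
  "flatten R = concat [[(a, u, b). (a, b) \<leftarrow> rep2 sA sB UNIV x]. (x, u) \<leftarrow> R]"

lemma phi_map_flatten: "phi T = tens3 sA sU sB (flatten (rep2 sc2 sU (ab_carrier sA sB) T))"
  unfolding phi_map_def flatten_def ..

lemma phi_map_apply_nonlinear:
  "\<not> (Vector_Spaces.linear sA (*) f \<and> Vector_Spaces.linear sU (*) g \<and> Vector_Spaces.linear sB (*) h)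
   \<Longrightarrow> phi T f g h = 0"
  unfolding phi_map_def by (rule tens3_apply_nonlinear)

lemma phi_map_apply:
  assumes T: "T \<in> LR" and f: "Vector_Spaces.linear sA (*) f" and g: "Vector_Spaces.linear sU (*) g"
    and h: "Vector_Spaces.linear sB (*) h"
  shows "phi T f g h = T (\<lambda>x. x f h) g"
proof -
  let ?R = "rep2 sc2 sU (ab_carrier sA sB) T"
  note R = lr_carrier_rep2[OF T]
  have first_leg: "fst p f h = (\<Sum>ab\<leftarrow>rep2 sA sB UNIV (fst p). f (fst ab) * h (snd ab))"
    if "p \<in> set ?R" for p
  proof -
    have "fst p \<in> range (tens2 sA sB)" using R that unfolding ab_carrier_def by auto
    then have "fst p f h = tens2 sA sB (rep2 sA sB UNIV (fst p)) f h" by (simp add: tens2_rep2_UNIV)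
    then show ?thesis by (simp add: tens2_apply[OF f h] case_prod_unfold)
  qed
  have "phi T f g h = (\<Sum>p\<leftarrow>?R. \<Sum>ab\<leftarrow>rep2 sA sB UNIV (fst p). f (fst ab) * g (snd p) * h (snd ab))"
    unfolding phi_map_def tens3_apply[OF f g h]
    by (simp add: sum_list_concat_eq sum_list_map_concat comp_def case_prod_unfold)
  also have "\<dots> = (\<Sum>p\<leftarrow>?R. fst p f h * g (snd p))"
    by (rule arg_cong[where f=sum_list], rule map_cong[OF refl])
       (simp add: first_leg sum_list_mult_const[symmetric] sum_list_const_mult[symmetric] ac_simps)
  also have "\<dots> = T (\<lambda>x. x f h) g"
    using R tens2_apply[OF linear_functional_eval2 g, of ?R] by (simp add: case_prod_unfold)
  finally show ?thesis .
qed

text \<open>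
  A linear functional on the first leg of \<open>LR\<close> need not be an evaluation, so injectivity is
  obtained by comparing partial contractions, which are determined by evaluations.
\<close>

lemma lr_contraction_apply:
  assumes L: "set (map fst L) \<subseteq> ab_carrier sA sB" "tens2 sc2 sU L = T"
    and g: "Vector_Spaces.linear sU (*) g"
  shows "(\<Sum>(v,w)\<leftarrow>L. sc2 (g w) v) f h =
    (if Vector_Spaces.linear sA (*) f \<and> Vector_Spaces.linear sB (*) h then phi T f g h else 0)"
proof -
  have T: "T \<in> LR" using L tens2_in_lr_carrier by blast
  have "(\<Sum>(v,w)\<leftarrow>L. sc2 (g w) v) f h = (\<Sum>p\<leftarrow>L. g (snd p) * fst p f h)"
    by (simp add: sum_list_apply2 sc2_def case_prod_unfold)
  also have "\<dots> = (if Vector_Spaces.linear sA (*) f \<and> Vector_Spaces.linear sB (*) h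
      then phi T f g h else 0)"
  proof (cases "Vector_Spaces.linear sA (*) f \<and> Vector_Spaces.linear sB (*) h")
    case True
    then show ?thesis
      using phi_map_apply[OF T _ g, of f h] tens2_apply[OF linear_functional_eval2 g, of L] L(2)
      by (simp add: case_prod_unfold mult.commute)
  next
    case False
    then show ?thesis
      using L(1) ab_carrier_apply_nonlinear[OF _ False] by (auto intro!: sum_list_eq_zeroI)
  qed
  finally show ?thesis .
qed

lemma inj_on_phi_map: "inj_on phi LR"
proof (rule inj_onI)
  fix T T' assume T: "T \<in> LR" and T': "T' \<in> LR" and eq: "phi T = phi T'"
  let ?R = "rep2 sc2 sU (ab_carrier sA sB) T" and ?R' = "rep2 sc2 sU (ab_carrier sA sB) T'"
  note R = lr_carrier_rep2[OF T] and R' = lr_carrier_rep2[OF T']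
  have "tens2 sc2 sU ?R = tens2 sc2 sU ?R'"
  proof (rule tens2_eqI)
    fix F :: "(('a \<Rightarrow> 'k) \<Rightarrow> ('b \<Rightarrow> 'k) \<Rightarrow> 'k) \<Rightarrow> 'k" and G :: "'u \<Rightarrow> 'k"
    assume F: "Vector_Spaces.linear sc2 (*) F" and G: "Vector_Spaces.linear sU (*) G"
    show "(\<Sum>(v,w)\<leftarrow>?R. F v * G w) = (\<Sum>(v,w)\<leftarrow>?R'. F v * G w)"
    proof (rule sum_list_bilinear_eq_if_contractions_eq[OF vector_space_U])
      show "F (x + y) * G w = F x * G w + F y * G w" for x y w
        by (simp add: linear_functional_add[OF F] distrib_right)
      show "F (sc2 c x) * G w = c * (F x * G w)" for c x w
        by (simp add: linear_functional_scale[OF F])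
      show "Vector_Spaces.linear sU (*) (\<lambda>w. F v * G w)" for v
        by (rule linear_functional_cmult[OF G])
      fix g :: "'u \<Rightarrow> 'k" assume g: "Vector_Spaces.linear sU (*) g"
      show "(\<Sum>(v,w)\<leftarrow>?R. sc2 (g w) v) = (\<Sum>(v,w)\<leftarrow>?R'. sc2 (g w) v)"
        by (intro ext) (simp only: lr_contraction_apply[OF conjunct1[OF R] conjunct2[OF R] g]
            lr_contraction_apply[OF conjunct1[OF R'] conjunct2[OF R'] g] eq)
    qed
  qed
  then show "T = T'" using R R' by simp
qed

lemma phi_map_image: "phi ` LR = ts_carrier sA sU sB"
proof
  show "phi ` LR \<subseteq> ts_carrier sA sU sB"
    unfolding phi_map_def ts_carrier_def by blast
  show "ts_carrier sA sU sB \<subseteq> phi ` LR"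
  proof
    fix X assume "X \<in> ts_carrier sA sU sB"
    then obtain Z where Z: "X = tens3 sA sU sB Z" unfolding ts_carrier_def by blast
    let ?xs = "[(tens2 sA sB [(a, b)], u). (a, u, b) \<leftarrow> Z]"
    have preimage: "tens2 sc2 sU ?xs \<in> LR"
      by (rule tens2_in_lr_carrier) (auto simp: ab_carrier_def)
    have "phi (tens2 sc2 sU ?xs) = X"
      unfolding Z
    proof (rule trilinear_form_eqI)
      fix f g h assume f: "Vector_Spaces.linear sA (*) f" and g: "Vector_Spaces.linear sU (*) g"
        and h: "Vector_Spaces.linear sB (*) h"
      show "phi (tens2 sc2 sU ?xs) f g h = tens3 sA sU sB Z f g h"
        unfolding phi_map_apply[OF preimage f g h]
        by (simp add: tens2_apply[OF linear_functional_eval2 g] tens3_apply[OF f g h]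
            tens2_apply[OF f h] comp_def case_prod_unfold ac_simps)
    qed (simp_all add: phi_map_apply_nonlinear tens3_apply_nonlinear)
    with preimage show "X \<in> phi ` LR" by blast
  qed
qed

lemma phi_map_add:
  assumes x: "x \<in> LR" and y: "y \<in> LR"
  shows "phi (x + y) = phi x + phi y"
  by (rule trilinear_form_eqI[where sV=sA and sW=sU and sZ=sB])
     (simp_all add: phi_map_apply[OF lr_carrier_add[OF x y]] phi_map_apply[OF x] phi_map_apply[OF y]
       phi_map_apply_nonlinear)

lemma phi_map_sc2:
  assumes x: "x \<in> LR"
  shows "phi (sc2 c x) = sc3 c (phi x)"
proof (rule trilinear_form_eqI[where sV=sA and sW=sU and sZ=sB])
  fix f g h assume f: "Vector_Spaces.linear sA (*) f" and g: "Vector_Spaces.linear sU (*) g"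
    and h: "Vector_Spaces.linear sB (*) h"
  show "phi (sc2 c x) f g h = sc3 c (phi x) f g h"
    by (simp only: sc3_def phi_map_apply[OF lr_carrier_sc2[OF x] f g h] phi_map_apply[OF x f g h])
       (simp add: sc2_def)
qed (simp_all add: phi_map_apply_nonlinear sc3_def)

lemma phi_map_lr_one: "phi (lr_one sc2 (ab_one sA sB oneA oneB) sU) = ts_one sA sU sB oneA oneB"
proof -
  have one: "lr_one sc2 (ab_one sA sB oneA oneB) sU \<in> LR"
    unfolding lr_one_def by (rule tens2_in_lr_carrier) (auto simp: ab_one_def ab_carrier_def)
  show ?thesis unfolding ts_one_def
  proof (rule trilinear_form_eqI)
    fix f g h assume f: "Vector_Spaces.linear sA (*) f" and g: "Vector_Spaces.linear sU (*) g"
      and h: "Vector_Spaces.linear sB (*) h"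
    show "phi (lr_one sc2 (ab_one sA sB oneA oneB) sU) f g h = tens3 sA sU sB [(oneA, 1, oneB)] f g h"
      unfolding phi_map_apply[OF one f g h]
      by (simp add: lr_one_def ab_one_def tens2_apply[OF linear_functional_eval2 g]
          tens3_apply[OF f g h] tens2_apply[OF f h] ac_simps)
  qed (simp_all add: phi_map_apply_nonlinear tens3_apply_nonlinear)
qed

end

section \<open>Multiplicativity of \<open>\<phi>\<close>\<close>

lemma kalg_vector_space: "kalg s \<Longrightarrow> vector_space s"
  by (simp add: kalg_def)

lemma kalg_mult_scale: "kalg s \<Longrightarrow> x * s c y = s c (x * y)"
  unfolding kalg_def by metis

lemma kalg_scale_mult: "kalg s \<Longrightarrow> s c x * y = s c (x * y)"
  unfolding kalg_def by metis

locale smash_products = module_algebra_pair sH D e Phi Phii sA mA oneA actA sB mB oneB actB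
  for sH :: "'k::field \<Rightarrow> 'h::ring_1 \<Rightarrow> 'h" and D e Phi Phii
    and sA :: "'k \<Rightarrow> 'a::ab_group_add \<Rightarrow> 'a" and mA oneA actA
    and sB :: "'k \<Rightarrow> 'b::ab_group_add \<Rightarrow> 'b" and mB oneB actB +
  fixes sU :: "'k \<Rightarrow> 'u::ring_1 \<Rightarrow> 'u"
    and lam :: "'u \<Rightarrow> ('h \<times> 'u) list" and rho :: "'u \<Rightarrow> ('u \<times> 'h) list"
    and Phil Phili :: "('h \<times> 'h \<times> 'u) list"
    and Phir Phiri :: "('u \<times> 'h \<times> 'h) list"
    and Philr Philri :: "('h \<times> 'u \<times> 'h) list"
  assumes H: "qbialg sH D e Phi Phii"
    and U: "bicomod_alg sH D e Phi sU lam rho Phil Phili Phir Phiri Philr Philri"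
begin

lemma kalg_H: "kalg sH"
  using H unfolding qbialg_def by blast

lemma kalg_U: "kalg sU"
  using U unfolding bicomod_alg_def lcomod_alg_def by blast

lemma alg_hom2_lam: "alg_hom2 sU sH sU lam"
  using U unfolding bicomod_alg_def lcomod_alg_def by blast

lemma alg_hom2_rho: "alg_hom2 sU sU sH rho"
  using U unfolding bicomod_alg_def rcomod_alg_def by blast

lemmas vector_space_H = kalg_vector_space[OF kalg_H]

sublocale phi_map_setting sA sB sU
  by (rule phi_map_setting.intro[OF kalg_vector_space[OF kalg_U]])

abbreviation "mLR \<equiv> lr_mult sc2 AB mAB lactAB ractAB sU lam rho Phili Phiri Philri"
abbreviation "mTS \<equiv> ts_mult sA sU sB mA actA mB actB lam rho Phili Phiri Philri"

definition ts_pure_eval :: "('a \<Rightarrow> 'k) \<Rightarrow> ('u \<Rightarrow> 'k) \<Rightarrow> ('b \<Rightarrow> 'k) \<Rightarrow>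
    'a \<times> 'u \<times> 'b \<Rightarrow> 'a \<times> 'u \<times> 'b \<Rightarrow> 'k" where
  "ts_pure_eval f g h p q =
     (\<Sum>(a,u,b)\<leftarrow>ts_pure mA actA mB actB lam rho Phili Phiri Philri p q. f a * g u * h b)"

lemmas smash_eval_simps =
  sum_list_flatten_simps module_algebra_linearity_simps ring_distribs sum_list_const_mult
  kalg_mult_scale[OF kalg_H] kalg_scale_mult[OF kalg_H]
  kalg_mult_scale[OF kalg_U] kalg_scale_mult[OF kalg_U]

lemma mLR_in_LR: "mLR x y \<in> LR"
  unfolding lr_mult_def
  by (rule tens2_in_lr_carrier) (auto simp: lr_pure_def ab_mult_def ab_carrier_def)

context
  fixes f :: "'a \<Rightarrow> 'k" and g :: "'u \<Rightarrow> 'k" and h :: "'b \<Rightarrow> 'k"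
  assumes f: "Vector_Spaces.linear sA (*) f" and g: "Vector_Spaces.linear sU (*) g"
    and h: "Vector_Spaces.linear sB (*) h"
begin

lemma linear_ts_pure_eval_left_A: "Vector_Spaces.linear sA (*) (\<lambda>a. ts_pure_eval f g h (a, u, b) q)"
  unfolding linear_functional_iff ts_pure_eval_def ts_pure_def
  by (cases q) (simp add: vector_space_A smash_eval_simps linear_functional_add[OF f]
      linear_functional_scale[OF f] mult.assoc)

lemma linear_ts_pure_eval_right_A: "Vector_Spaces.linear sA (*) (\<lambda>a'. ts_pure_eval f g h p (a', u', b'))"
  unfolding linear_functional_iff ts_pure_eval_def ts_pure_def
  by (cases p) (simp add: vector_space_A smash_eval_simps linear_functional_add[OF f]
      linear_functional_scale[OF f] mult.assoc)

lemma linear_ts_pure_eval_left_B: "Vector_Spaces.linear sB (*) (\<lambda>b. ts_pure_eval f g h (a, u, b) q)"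
  unfolding linear_functional_iff ts_pure_eval_def ts_pure_def
  by (cases q) (simp add: vector_space_B smash_eval_simps linear_functional_add[OF h]
      linear_functional_scale[OF h] mult.assoc mult.left_commute[of _ "_::'k"])

lemma linear_ts_pure_eval_right_B: "Vector_Spaces.linear sB (*) (\<lambda>b'. ts_pure_eval f g h p (a', u', b'))"
  unfolding linear_functional_iff ts_pure_eval_def ts_pure_def
  by (cases p) (simp add: vector_space_B smash_eval_simps linear_functional_add[OF h]
      linear_functional_scale[OF h] mult.assoc mult.left_commute[of _ "_::'k"])

text \<open>
  In the \<open>U\<close>-legs linearity passes through \<open>\<lambda>\<close> and \<open>\<rho>\<close>, which are linear only
  up to equality of tensors.
\<close>

lemma linear_ts_pure_eval_left_U: "Vector_Spaces.linear sU (*) (\<lambda>u. ts_pure_eval f g h (a, u, b) q)"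
  unfolding ts_pure_eval_def ts_pure_def
  apply (cases q)
  apply (simp add: sum_list_flatten_simps)
  apply (rule linear_functional_sum_listI[OF vector_space_U])
  apply (rule linear_functional_through_tens2[OF vector_space_U vector_space_H vector_space_U])
  using alg_hom2_lam unfolding alg_hom2_def linear_functional_iff
  by (simp_all add: vector_space_H vector_space_U smash_eval_simps linear_functional_add[OF f]
      linear_functional_scale[OF f] linear_functional_add[OF g] linear_functional_scale[OF g]
      mult.assoc mult.left_commute[of _ "_::'k"])

lemma linear_ts_pure_eval_right_U: "Vector_Spaces.linear sU (*) (\<lambda>u'. ts_pure_eval f g h p (a', u', b'))"
  unfolding ts_pure_eval_def ts_pure_def
  apply (cases p)
  apply (simp add: sum_list_flatten_simps)
  apply (rule linear_functional_sum_listI[OF vector_space_U])+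
  apply (rule linear_functional_through_tens2[OF vector_space_U vector_space_U vector_space_H])
  using alg_hom2_rho unfolding alg_hom2_def linear_functional_iff
  by (simp_all add: vector_space_H vector_space_U smash_eval_simps linear_functional_add[OF g]
      linear_functional_scale[OF g] linear_functional_add[OF h] linear_functional_scale[OF h]
      mult.assoc mult.left_commute[of _ "_::'k"])

lemma sum_ts_pure_eval_tens3_eq:
  assumes P: "tens3 sA sU sB P = tens3 sA sU sB P'" and Q: "tens3 sA sU sB Q = tens3 sA sU sB Q'"
  shows "(\<Sum>p\<leftarrow>P. \<Sum>q\<leftarrow>Q. ts_pure_eval f g h p q) =
    (\<Sum>p\<leftarrow>P'. \<Sum>q\<leftarrow>Q'. ts_pure_eval f g h p q)"
proof -
  have left: "(\<Sum>(a,u,b)\<leftarrow>P. \<Sum>q\<leftarrow>Q. ts_pure_eval f g h (a,u,b) q) =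
      (\<Sum>(a,u,b)\<leftarrow>P'. \<Sum>q\<leftarrow>Q. ts_pure_eval f g h (a,u,b) q)"
    by (rule tens3_eq_imp_trilinear_sum_list_eq[OF vector_space_A vector_space_U vector_space_B P])
       (intro linear_functional_sum_listI vector_space_A vector_space_U vector_space_B
         linear_ts_pure_eval_left_A linear_ts_pure_eval_left_U linear_ts_pure_eval_left_B)+
  have right: "(\<Sum>(a,u,b)\<leftarrow>Q. \<Sum>p\<leftarrow>P'. ts_pure_eval f g h p (a,u,b)) =
      (\<Sum>(a,u,b)\<leftarrow>Q'. \<Sum>p\<leftarrow>P'. ts_pure_eval f g h p (a,u,b))"
    by (rule tens3_eq_imp_trilinear_sum_list_eq[OF vector_space_A vector_space_U vector_space_B Q])
       (intro linear_functional_sum_listI vector_space_A vector_space_U vector_space_B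
         linear_ts_pure_eval_right_A linear_ts_pure_eval_right_U linear_ts_pure_eval_right_B)+
  have "(\<Sum>p\<leftarrow>P. \<Sum>q\<leftarrow>Q. ts_pure_eval f g h p q) = (\<Sum>p\<leftarrow>P'. \<Sum>q\<leftarrow>Q. ts_pure_eval f g h p q)"
    using left by (simp add: case_prod_unfold)
  also have "\<dots> = (\<Sum>q\<leftarrow>Q. \<Sum>p\<leftarrow>P'. ts_pure_eval f g h p q)"
    by (rule sum_list_swap)
  also have "\<dots> = (\<Sum>q\<leftarrow>Q'. \<Sum>p\<leftarrow>P'. ts_pure_eval f g h p q)"
    using right by (simp add: case_prod_unfold)
  also have "\<dots> = (\<Sum>p\<leftarrow>P'. \<Sum>q\<leftarrow>Q'. ts_pure_eval f g h p q)"
    by (rule sum_list_swap)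
  finally show ?thesis .
qed

lemma lr_pure_eval_tens2:
  "(\<Sum>z\<leftarrow>lr_pure mAB lactAB ractAB lam rho Phili Phiri Philri (tens2 sA sB L, u) (tens2 sA sB L', u').
      fst z f h * g (snd z)) =
   (\<Sum>ab\<leftarrow>L. \<Sum>ab'\<leftarrow>L'. ts_pure_eval f g h (fst ab, u, snd ab) (fst ab', u', snd ab'))"
  unfolding lr_pure_def ts_pure_eval_def ts_pure_def
  apply (simp add: ab_tens2_simps tens2_apply[OF f h])
  apply (simp add: sum_list_flatten_simps sum_list_mult_const[symmetric] tens2_apply[OF f h])
  apply (simp only: sum_list_swap[where xs=L'])
  apply (simp only: sum_list_swap[where xs=L])
  apply (simp add: ac_simps)
  done

lemma ts_mult_apply:
  assumes "tens3 sA sU sB P = X" "tens3 sA sU sB Q = Y"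
  shows "mTS X Y f g h = (\<Sum>p\<leftarrow>P. \<Sum>q\<leftarrow>Q. ts_pure_eval f g h p q)"
proof -
  have "mTS X Y f g h = (\<Sum>p\<leftarrow>rep3 sA sU sB X. \<Sum>q\<leftarrow>rep3 sA sU sB Y. ts_pure_eval f g h p q)"
    unfolding ts_mult_def tens3_apply[OF f g h]
    by (simp add: ts_pure_eval_def sum_list_flatten_simps)
  also have "\<dots> = (\<Sum>p\<leftarrow>P. \<Sum>q\<leftarrow>Q. ts_pure_eval f g h p q)"
    by (rule sum_ts_pure_eval_tens3_eq) (simp_all add: assms[symmetric] tens3_rep3)
  finally show ?thesis .
qed

lemma phi_lr_mult_apply:
  assumes x: "x \<in> LR" and y: "y \<in> LR"
  shows "phi (mLR x y) f g h =
    (\<Sum>p\<leftarrow>flatten (rep2 sc2 sU AB x). \<Sum>q\<leftarrow>flatten (rep2 sc2 sU AB y). ts_pure_eval f g h p q)"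
proof -
  let ?Rx = "rep2 sc2 sU AB x" and ?Ry = "rep2 sc2 sU AB y"
  let ?lp = "lr_pure mAB lactAB ractAB lam rho Phili Phiri Philri"
  let ?rep = "\<lambda>p. rep2 sA sB UNIV (fst p)"
  have rep: "tens2 sA sB (?rep p) = fst p" if "fst p \<in> AB" for p
    using that by (auto simp: ab_carrier_def tens2_rep2_UNIV)
  have pure: "(\<Sum>z\<leftarrow>?lp p q. fst z f h * g (snd z)) = (\<Sum>ab\<leftarrow>?rep p. \<Sum>ab'\<leftarrow>?rep q.
      ts_pure_eval f g h (fst ab, snd p, snd ab) (fst ab', snd q, snd ab'))"
    if "p \<in> set ?Rx" "q \<in> set ?Ry" for p q
  proof -
    have "fst p \<in> AB" "fst q \<in> AB"
      using that lr_carrier_rep2[OF x] lr_carrier_rep2[OF y] by auto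
    then show ?thesis
      using lr_pure_eval_tens2[of "?rep p" "snd p" "?rep q" "snd q"] by (simp add: rep)
  qed
  have "phi (mLR x y) f g h = mLR x y (\<lambda>x. x f h) g"
    by (rule phi_map_apply[OF mLR_in_LR f g h])
  also have "\<dots> = (\<Sum>p\<leftarrow>?Rx. \<Sum>q\<leftarrow>?Ry. \<Sum>z\<leftarrow>?lp p q. fst z f h * g (snd z))"
    unfolding lr_mult_def tens2_apply[OF linear_functional_eval2 g]
    by (simp add: sum_list_flatten_simps)
  also have "\<dots> = (\<Sum>p\<leftarrow>?Rx. \<Sum>q\<leftarrow>?Ry. \<Sum>ab\<leftarrow>?rep p. \<Sum>ab'\<leftarrow>?rep q.
      ts_pure_eval f g h (fst ab, snd p, snd ab) (fst ab', snd q, snd ab'))"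
    by (rule arg_cong[where f=sum_list], rule map_cong[OF refl],
        rule arg_cong[where f=sum_list], rule map_cong[OF refl], rule pure)
  also have "\<dots> = (\<Sum>p\<leftarrow>?Rx. \<Sum>ab\<leftarrow>?rep p. \<Sum>q\<leftarrow>?Ry. \<Sum>ab'\<leftarrow>?rep q.
      ts_pure_eval f g h (fst ab, snd p, snd ab) (fst ab', snd q, snd ab'))"
    by (rule arg_cong[where f=sum_list], rule map_cong[OF refl], rule sum_list_swap)
  also have "\<dots> = (\<Sum>p\<leftarrow>flatten ?Rx. \<Sum>q\<leftarrow>flatten ?Ry. ts_pure_eval f g h p q)"
    by (simp add: flatten_def sum_list_flatten_simps)
  finally show ?thesis .
qed

end

lemma phi_map_lr_mult:
  assumes "x \<in> LR" "y \<in> LR"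
  shows "phi (mLR x y) = mTS (phi x) (phi y)"
proof (rule trilinear_form_eqI[where sV=sA and sW=sU and sZ=sB])
  fix f g h assume f: "Vector_Spaces.linear sA (*) f" and g: "Vector_Spaces.linear sU (*) g"
    and h: "Vector_Spaces.linear sB (*) h"
  show "phi (mLR x y) f g h = mTS (phi x) (phi y) f g h"
    by (simp only: phi_lr_mult_apply[OF f g h assms]
        ts_mult_apply[OF f g h phi_map_flatten[symmetric] phi_map_flatten[symmetric]])
qed (simp_all add: phi_map_apply_nonlinear ts_mult_def tens3_apply_nonlinear)

end

theorem proposition2p5:
  fixes sH :: "'k::field \<Rightarrow> 'h::ring_1 \<Rightarrow> 'h"
    and D :: "'h \<Rightarrow> ('h \<times> 'h) list" and e :: "'h \<Rightarrow> 'k"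
    and Phi Phii :: "('h \<times> 'h \<times> 'h) list"
    and sA :: "'k \<Rightarrow> 'a::ab_group_add \<Rightarrow> 'a" and mA :: "'a \<Rightarrow> 'a \<Rightarrow> 'a" and oneA :: 'a
    and actA :: "'h \<Rightarrow> 'a \<Rightarrow> 'a"
    and sB :: "'k \<Rightarrow> 'b::ab_group_add \<Rightarrow> 'b" and mB :: "'b \<Rightarrow> 'b \<Rightarrow> 'b" and oneB :: 'b
    and actB :: "'b \<Rightarrow> 'h \<Rightarrow> 'b"
    and sU :: "'k \<Rightarrow> 'u::ring_1 \<Rightarrow> 'u"
    and lam :: "'u \<Rightarrow> ('h \<times> 'u) list" and rho :: "'u \<Rightarrow> ('u \<times> 'h) list"
    and Phil Phili :: "('h \<times> 'h \<times> 'u) list"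
    and Phir Phiri :: "('u \<times> 'h \<times> 'h) list"
    and Philr Philri :: "('h \<times> 'u \<times> 'h) list"
  assumes H: "qbialg sH D e Phi Phii"
    and A: "lmod_alg sH D e Phi sA mA oneA actA"
    and B: "rmod_alg sH D e Phii sB mB oneB actB"
    and U: "bicomod_alg sH D e Phi sU lam rho Phil Phili Phir Phiri Philr Philri"
  shows "bimod_alg sH D e Phi Phii sc2 (ab_carrier sA sB) (ab_mult sA sB mA mB)
           (ab_one sA sB oneA oneB) (ab_lact sA sB actA) (ab_ract sA sB actB)
    \<and> (let C = lr_carrier sc2 (ab_carrier sA sB) sU;
           C' = ts_carrier sA sU sB;
           f = phi_map sA sU sB
       in bij_betw f C C'
          \<and> (\<forall>x\<in>C. \<forall>y\<in>C. f (x + y) = f x + f y)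
          \<and> (\<forall>c. \<forall>x\<in>C. f (sc2 c x) = sc3 c (f x))
          \<and> (\<forall>x\<in>C. \<forall>y\<in>C.
               f (lr_mult sc2 (ab_carrier sA sB) (ab_mult sA sB mA mB) (ab_lact sA sB actA)
                    (ab_ract sA sB actB) sU lam rho Phili Phiri Philri x y)
               = ts_mult sA sU sB mA actA mB actB lam rho Phili Phiri Philri (f x) (f y))
          \<and> f (lr_one sc2 (ab_one sA sB oneA oneB) sU) = ts_one sA sU sB oneA oneB)"
proof -
  interpret smash_products sH D e Phi Phii sA mA oneA actA sB mB oneB actB
      sU lam rho Phil Phili Phir Phiri Philr Philri
    using A B H U by (intro smash_products.intro module_algebra_pair.intro smash_products_axioms.intro)
  show ?thesis
    unfolding Let_def bij_betw_def
    using bimod_alg_AB inj_on_phi_map phi_map_image phi_map_add phi_map_sc2 phi_map_lr_mult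
      phi_map_lr_one
    by auto
qed

end
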